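(* Let $(P,Q)=(p_1,\dots,p_N,q_1,\dots,q_N)$ be a global solution of the Cucker–Smale model with velocity control described in the context. Then: (1) The following three statements are equivalent: (a) $(P,Q)$ exhibits flocking, i.e. $\sup_{t\ge0}D_Q(t)<\infty$ and $\lim_{t\to\infty}D_P(t)=0$; (b) $D_P$ decays exponentially, i.e. there exist constants $B,C>0$ with $D_P(t)\le Be^{-Ct}$ for all $t\ge0$; (c) the agents are spatially bounded, i.e. $\sup_{t\ge0}D_Q(t)<\infty$. (2) If \[ \|P^0\|<\frac{\mathcal M\kappa}{M_{G'}}\int_{\|Q^0\|}^{+\infty}\psi(s)\,ds, \] then $(P,Q)$ exhibits flocking. In particular, if $\|\psi\|_{L^1(\mathbb R_+)}=\infty$, then flocking occurs for every initial datum.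
   Context: Let $N\ge1$, $d\ge1$, $\kappa>0$, and write $[N]=\{1,\dots,N\}$, $\mathbb R_+=(0,\infty)$, $\mathbb R_{\ge0}=[0,\infty)$. The velocity control function $G:\mathbb R^d\to\mathbb R^d$ is $G(p)=g(|p|)\,p/|p|$ for $p\neq0$ and $G(0)=0$, where $g\in C^1(\mathbb R_{\ge0})$, $g(0)=0$, on every compact interval $g'$ satisfies $0<m\le g'\le M$ for some constants $m,M$ (depending on the interval), and $g$ is convex or concave on $\mathbb R_+$. The communication kernel $\psi:\mathbb R_+\to\mathbb R_+$ is bounded, Lipschitz continuous, and nonincreasing ($(\psi(r)-\psi(s))(r-s)\le0$ for all $r,s$). The model is the system of ODEs, for $i\in[N]$ and $t>0$, \[ \dot q_i=G(p_i),\qquad \dot p_i=\frac{\kappa}{N}\sum_{k=1}^N\psi(|q_k-q_i|)\big(G(p_k)-G(p_i)\big),\qquad (q_i,p_i)(0)=(q_i^0,p_i^0)\in\mathbb R^d\times\mathbb R^d. \] Notation: $P^0=(p_1^0,\dots,p_N^0)$, $Q^0=(q_1^0,\dots,q_N^0)$; $\|Q\|^2=\sum_{i,j\in[N]}|q_i-q_j|^2$, $\|P\|^2=\sum_{i,j\in[N]}|p_i-p_j|^2$; $D_Q(t)=\max_{i,j}|q_i(t)-q_j(t)|$, $D_P(t)=\max_{i,j}|p_i(t)-p_j(t)|$; $P^0_M=\max_i|p_i^0|$, $M_{G'}=\max\{g'(r):0\le r\le P^0_M\}$, $m_{G'}=\min\{g'(r):0\le r\le P^0_M\}$, and $\mathcal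 M=\min\{m_{G'},\,m_{G'}^2/M_{G'}\}$. *)

theory Defs
  imports "HOL-Analysis.Analysis"
begin

definition vel_ctrl :: "(real \<Rightarrow> real) \<Rightarrow> 'a::real_normed_vector \<Rightarrow> 'a" where
  "vel_ctrl g v = (if v = 0 then 0 else g (norm v) *\<^sub>R (v /\<^sub>R norm v))"

definition cfg_norm :: "nat \<Rightarrow> (nat \<Rightarrow> 'a::real_normed_vector) \<Rightarrow> real" where
  "cfg_norm N x = sqrt (\<Sum>i\<in>{1..N}. \<Sum>j\<in>{1..N}. (norm (x i - x j))\<^sup>2)"

definition cfg_diam :: "nat \<Rightarrow> (nat \<Rightarrow> 'a::real_normed_vector) \<Rightarrow> real" where
  "cfg_diam N x = Max {norm (x i - x j) | i j. i \<in> {1..N} \<and> j \<in> {1..N}}"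

definition CSVC_solution ::
  "nat \<Rightarrow> real \<Rightarrow> (real \<Rightarrow> real) \<Rightarrow> (real \<Rightarrow> real)
   \<Rightarrow> (nat \<Rightarrow> 'a::euclidean_space) \<Rightarrow> (nat \<Rightarrow> 'a)
   \<Rightarrow> (nat \<Rightarrow> real \<Rightarrow> 'a) \<Rightarrow> (nat \<Rightarrow> real \<Rightarrow> 'a) \<Rightarrow> bool" where
  "CSVC_solution N \<kappa> g \<psi> q0 p0 q p \<longleftrightarrow>
     (\<forall>i\<in>{1..N}.
        q i 0 = q0 i \<and> p i 0 = p0 i \<and>
        continuous_on {0..} (q i) \<and> continuous_on {0..} (p i) \<and>
        (\<forall>t>0. (q i has_vector_derivative vel_ctrl g (p i t)) (at t)) \<and>
        (\<forall>t>0. (p i has_vector_derivative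
                 (\<kappa> / real N) *\<^sub>R (\<Sum>k\<in>{1..N}. \<psi> (norm (q k t - q i t)) *\<^sub>R
                     (vel_ctrl g (p k t) - vel_ctrl g (p i t)))) (at t)))"

definition flocking :: "nat \<Rightarrow> (nat \<Rightarrow> real \<Rightarrow> 'a::real_normed_vector) \<Rightarrow> (nat \<Rightarrow> real \<Rightarrow> 'a) \<Rightarrow> bool" where
  "flocking N q p \<longleftrightarrow>
     (\<exists>C. \<forall>t\<ge>0. cfg_diam N (\<lambda>i. q i t) \<le> C) \<and>
     ((\<lambda>t. cfg_diam N (\<lambda>i. p i t)) \<longlongrightarrow> 0) at_top"

end

theory Submission
  imports Defs "HOL-Real_Asymp.Real_Asymp"
begin

text \<open>
  The speeds obey a maximum principle, \<open>norm (p i t) \<le> P0M\<close>: the alignment force on a fastest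
  agent points inwards. On the ball of radius \<open>P0M\<close> the velocity control is strongly monotone with
  constant \<open>mG\<close> and Lipschitz with constant \<open>MG\<close>; hence, for \<open>E = \<parallel>P\<parallel>\<^sup>2\<close> and \<open>Y = \<parallel>Q\<parallel>\<^sup>2\<close>,
  \<open>E' \<le> - 2 \<kappa> mG \<psi>(\<parallel>Q\<parallel>) E\<close> and \<open>\<parallel>Q\<parallel>' \<le> MG \<parallel>P\<parallel>\<close>. If the positions stay bounded, the
  communication weights are bounded below and \<open>E\<close> decays exponentially; conversely, exponentially
  decaying velocity differences integrate to bounded positions. The two differential inequalities
  together make \<open>\<parallel>P\<parallel> + (mG \<kappa> / MG) \<Psi>(\<parallel>Q\<parallel>)\<close> nonincreasing for the primitive \<open>\<Psi>\<close> of \<open>\<psi>\<close>,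
  which keeps \<open>\<parallel>Q\<parallel>\<close> below every \<open>R\<close> with \<open>\<parallel>P\<^sup>0\<parallel> < (mG \<kappa> / MG) (\<Psi> R - \<Psi> \<parallel>Q\<^sup>0\<parallel>)\<close>;
  since \<open>\<M> \<le> mG\<close>, the integral condition provides such an \<open>R\<close>.
\<close>

section \<open>Calculus on the half-line\<close>

lemma DERIV_lower_bound_imp_diff_ge:
  fixes f f' :: "real \<Rightarrow> real"
  assumes "a \<le> b" and "continuous_on {a..b} f"
    and "\<And>x. a < x \<Longrightarrow> x < b \<Longrightarrow> (f has_real_derivative f' x) (at x)"
    and "\<And>x. a < x \<Longrightarrow> x < b \<Longrightarrow> c \<le> f' x"
  shows "c * (b - a) \<le> f b - f a"
proof -
  have "f a - c * a \<le> f b - c * b"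
  proof (rule DERIV_nonneg_imp_increasing_open[OF \<open>a \<le> b\<close>])
    fix x assume "a < x" "x < b"
    then show "\<exists>y. ((\<lambda>x. f x - c * x) has_real_derivative y) (at x) \<and> 0 \<le> y"
      using assms(3,4) by (intro exI[of _ "f' x - c"]) (auto intro!: derivative_eq_intros)
  qed (use assms(2) in \<open>intro continuous_intros\<close>)
  then show ?thesis by (simp add: algebra_simps)
qed

lemma DERIV_upper_bound_imp_diff_le:
  fixes f f' :: "real \<Rightarrow> real"
  assumes "a \<le> b" and "continuous_on {a..b} f"
    and "\<And>x. a < x \<Longrightarrow> x < b \<Longrightarrow> (f has_real_derivative f' x) (at x)"
    and "\<And>x. a < x \<Longrightarrow> x < b \<Longrightarrow> f' x \<le> c"
  shows "f b - f a \<le> c * (b - a)"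
proof -
  have "- c * (b - a) \<le> - f b - - f a"
    by (rule DERIV_lower_bound_imp_diff_ge[of a b "\<lambda>x. - f x" "\<lambda>x. - f' x"])
      (use assms in \<open>auto intro!: continuous_intros derivative_intros\<close>)
  then show ?thesis by simp
qed

lemma DERIV_nonpos_imp_antimono_atLeast_0:
  fixes F F' :: "real \<Rightarrow> real"
  assumes "continuous_on {0..} F" and "\<And>t. t > 0 \<Longrightarrow> (F has_real_derivative F' t) (at t)"
    and "\<And>t. t > 0 \<Longrightarrow> F' t \<le> 0" and "0 \<le> s" "s \<le> t"
  shows "F t \<le> F s"
  using DERIV_upper_bound_imp_diff_le[of s t F F' 0] assms continuous_on_subset[OF assms(1)]
  by fastforce

lemma has_real_derivative_norm_power2:
  fixes f :: "real \<Rightarrow> 'a::real_inner"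
  assumes "(f has_vector_derivative f') (at t)"
  shows "((\<lambda>t. (norm (f t))\<^sup>2) has_real_derivative 2 * (f t \<bullet> f')) (at t)"
proof -
  have "((\<lambda>t. f t \<bullet> f t) has_derivative (\<lambda>h. f t \<bullet> (h *\<^sub>R f') + (h *\<^sub>R f') \<bullet> f t)) (at t)"
    using assms by (intro has_derivative_inner) (simp_all add: has_vector_derivative_def)
  moreover have "(\<lambda>h. f t \<bullet> (h *\<^sub>R f') + (h *\<^sub>R f') \<bullet> f t) = (*) (2 * (f t \<bullet> f'))"
    by (auto simp: inner_commute algebra_simps)
  ultimately show ?thesis
    by (simp add: has_field_derivative_def power2_norm_eq_inner)
qed

lemma exp_decay_of_DERIV_le:
  fixes F F' :: "real \<Rightarrow> real"
  assumes "continuous_on {0..} F" and "\<And>t. t > 0 \<Longrightarrow> (F has_real_derivative F' t) (at t)"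
    and "\<And>t. t > 0 \<Longrightarrow> F' t \<le> - l * F t" and "0 \<le> t"
  shows "F t \<le> F 0 * exp (- l * t)"
proof -
  have "F t * exp (l * t) \<le> F 0 * exp (l * 0)"
  proof (rule DERIV_nonpos_imp_antimono_atLeast_0[OF _ _ _ order_refl \<open>0 \<le> t\<close>])
    show "continuous_on {0..} (\<lambda>t. F t * exp (l * t))"
      using assms(1) by (intro continuous_intros)
    fix s :: real assume "s > 0"
    then show "((\<lambda>t. F t * exp (l * t)) has_real_derivative (F' s + l * F s) * exp (l * s)) (at s)"
      using assms(2) by (auto intro!: derivative_eq_intros simp: algebra_simps)
    show "(F' s + l * F s) * exp (l * s) \<le> 0"
      using assms(3)[OF \<open>s > 0\<close>] by (intro mult_nonpos_nonneg) auto
  qed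
  then show ?thesis by (simp add: exp_minus field_simps)
qed

lemma norm_diff_le_of_exp_decaying_derivative:
  fixes f f' :: "real \<Rightarrow> 'a::real_normed_vector"
  assumes "continuous_on {0..} f" and "\<And>t. t > 0 \<Longrightarrow> (f has_vector_derivative f' t) (at t)"
    and "\<And>t. t > 0 \<Longrightarrow> norm (f' t) \<le> K * exp (- C * t)" and "C > 0" "0 \<le> K" "0 \<le> t"
  shows "norm (f t - f 0) \<le> K / C"
proof (cases "t = 0")
  case False
  have "norm (f t - f 0) \<le> - K / C * exp (- C * t) - - K / C * exp (- C * 0)"
  proof (rule differentiable_bound_general[of 0 t f "\<lambda>s. - K / C * exp (- C * s)" f' "\<lambda>s. K * exp (- C * s)"])
    show "0 < t" using False \<open>0 \<le> t\<close> by simp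
    show "continuous_on {0..t} f" using continuous_on_subset[OF assms(1)] by auto
    show "continuous_on {0..t} (\<lambda>s. - K / C * exp (- C * s))" by (intro continuous_intros)
    fix s assume "0 < s" "s < t"
    then show "(f has_vector_derivative f' s) (at s)" "norm (f' s) \<le> K * exp (- C * s)"
      using assms(2,3) by auto
    show "((\<lambda>s. - K / C * exp (- C * s)) has_vector_derivative K * exp (- C * s)) (at s)"
      unfolding has_real_derivative_iff_has_vector_derivative[symmetric]
      using \<open>C > 0\<close> by (auto intro!: derivative_eq_intros)
  qed
  also have "\<dots> \<le> K / C" using assms(4,5) by simp
  finally show ?thesis .
qed (use assms in simp)

text \<open>
  At the first time the barrier \<open>B + \<epsilon> (1 + t)\<close> is reached, a largest \<open>u k\<close> is on or above it;
  it cannot have got there from below, since \<open>u' k \<le> 0 < \<epsilon>\<close> at that time.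
\<close>

lemma max_principle_with_slack:
  fixes u u' :: "'i \<Rightarrow> real \<Rightarrow> real"
  assumes "finite I"
    and cont: "\<And>i. i \<in> I \<Longrightarrow> continuous_on {0..} (u i)"
    and deriv: "\<And>i t. i \<in> I \<Longrightarrow> t > 0 \<Longrightarrow> (u i has_real_derivative u' i t) (at t)"
    and at_max: "\<And>i t. i \<in> I \<Longrightarrow> t > 0 \<Longrightarrow> (\<And>k. k \<in> I \<Longrightarrow> u k t \<le> u i t) \<Longrightarrow> u' i t \<le> 0"
    and init: "\<And>i. i \<in> I \<Longrightarrow> u i 0 \<le> B"
    and "\<epsilon> > 0" and i: "i \<in> I" and t: "0 \<le> t"
  shows "u i t < B + \<epsilon> * (1 + t)"
proof (rule ccontr)
  define S where "S = {t \<in> {0..}. \<exists>i\<in>I. B + \<epsilon> * (1 + t) \<le> u i t}"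
  assume "\<not> ?thesis"
  then have "t \<in> S" using i t by (auto simp: S_def not_less)
  have "S = (\<Union>i\<in>I. {t \<in> {0..}. B + \<epsilon> * (1 + t) \<le> u i t})" by (auto simp: S_def)
  moreover have "closed {t \<in> {0..}. B + \<epsilon> * (1 + t) \<le> u i t}" if "i \<in> I" for i
    by (rule continuous_on_closed_Collect_le) (auto intro!: continuous_intros cont that)
  ultimately have "closed S" using \<open>finite I\<close> by auto
  have bdd: "bdd_below S" by (rule bdd_belowI[of _ 0]) (auto simp: S_def)
  define s where "s = Inf S"
  have "s \<in> S" unfolding s_def using \<open>t \<in> S\<close> \<open>closed S\<close> bdd by (intro closed_contains_Inf) auto
  have before_s: "r \<notin> S" if "r < s" for r
    using cInf_lower[OF _ bdd, of r] that by (auto simp: s_def)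
  obtain j where j: "j \<in> I" "B + \<epsilon> * (1 + s) \<le> u j s" "0 \<le> s"
    using \<open>s \<in> S\<close> by (auto simp: S_def)
  have "s > 0"
    using j init[OF \<open>j \<in> I\<close>] \<open>\<epsilon> > 0\<close> by (cases "s = 0") auto
  obtain k where "k \<in> I" and k_Max: "Max ((\<lambda>k. u k s) ` I) = u k s"
    using obtains_MAX[of I "\<lambda>k. u k s"] \<open>finite I\<close> j(1) by blast
  have k_max: "u l s \<le> u k s" if "l \<in> I" for l
    unfolding k_Max[symmetric] using \<open>finite I\<close> that by (intro Max_ge) auto
  define h where "h = (\<lambda>r. u k r - (B + \<epsilon> * (1 + r)))"
  have "(h has_real_derivative u' k s - \<epsilon>) (at s)"
    unfolding h_def using deriv[OF \<open>k \<in> I\<close> \<open>s > 0\<close>] by (auto intro!: derivative_eq_intros)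
  moreover have "u' k s - \<epsilon> < 0"
    using at_max[OF \<open>k \<in> I\<close> \<open>s > 0\<close> k_max] \<open>\<epsilon> > 0\<close> by simp
  ultimately obtain d where "d > 0" and d: "\<And>r. 0 < r \<Longrightarrow> r < d \<Longrightarrow> h s < h (s - r)"
    using DERIV_neg_dec_left by blast
  define r where "r = min (d / 2) (s / 2)"
  have r: "0 < r" "r < d" "r \<le> s" using \<open>d > 0\<close> \<open>s > 0\<close> by (auto simp: r_def)
  have "0 \<le> h s" using j k_max[OF j(1)] by (simp add: h_def)
  then have "0 < h (s - r)" using d[OF r(1,2)] by simp
  then have "s - r \<in> S" using r \<open>k \<in> I\<close> by (auto simp: S_def h_def intro!: bexI[of _ k])
  moreover have "s - r < s" using r by simp
  ultimately show False using before_s by blast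
qed

lemma max_principle:
  fixes u u' :: "'i \<Rightarrow> real \<Rightarrow> real"
  assumes "finite I"
    and "\<And>i. i \<in> I \<Longrightarrow> continuous_on {0..} (u i)"
    and "\<And>i t. i \<in> I \<Longrightarrow> t > 0 \<Longrightarrow> (u i has_real_derivative u' i t) (at t)"
    and "\<And>i t. i \<in> I \<Longrightarrow> t > 0 \<Longrightarrow> (\<And>k. k \<in> I \<Longrightarrow> u k t \<le> u i t) \<Longrightarrow> u' i t \<le> 0"
    and "\<And>i. i \<in> I \<Longrightarrow> u i 0 \<le> B"
    and "i \<in> I" "0 \<le> t"
  shows "u i t \<le> B"
proof (rule field_le_epsilon)
  fix e :: real assume "e > 0"
  then have "u i t < B + e / (1 + t) * (1 + t)"
    using assms by (intro max_principle_with_slack[where u' = u']) auto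
  then show "u i t \<le> B + e" using \<open>0 \<le> t\<close> by simp
qed

section \<open>Double sums\<close>

lemma Cauchy_Schwarz_double_sum:
  fixes a b :: "'i \<Rightarrow> 'i \<Rightarrow> real"
  assumes "finite I"
  shows "(\<Sum>i\<in>I. \<Sum>j\<in>I. a i j * b i j)
    \<le> sqrt (\<Sum>i\<in>I. \<Sum>j\<in>I. (a i j)\<^sup>2) * sqrt (\<Sum>i\<in>I. \<Sum>j\<in>I. (b i j)\<^sup>2)"
proof -
  have "(\<Sum>i\<in>I. \<Sum>j\<in>I. a i j * b i j) = (\<Sum>x\<in>I \<times> I. a (fst x) (snd x) * b (fst x) (snd x))"
    by (simp add: sum.cartesian_product case_prod_beta)
  also have "\<dots> \<le> (\<Sum>x\<in>I \<times> I. \<bar>a (fst x) (snd x)\<bar> * \<bar>b (fst x) (snd x)\<bar>)"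
    by (intro sum_mono) (simp add: abs_mult[symmetric])
  also have "\<dots> \<le> L2_set (\<lambda>x. a (fst x) (snd x)) (I \<times> I) * L2_set (\<lambda>x. b (fst x) (snd x)) (I \<times> I)"
    by (rule L2_set_mult_ineq)
  also have "\<dots> = sqrt (\<Sum>i\<in>I. \<Sum>j\<in>I. (a i j)\<^sup>2) * sqrt (\<Sum>i\<in>I. \<Sum>j\<in>I. (b i j)\<^sup>2)"
    by (simp add: L2_set_def sum.cartesian_product case_prod_beta)
  finally show ?thesis .
qed

lemma double_sum_antisym_eq_0:
  fixes F :: "'i \<Rightarrow> 'i \<Rightarrow> 'b::real_vector"
  assumes "\<And>i k. F k i = - F i k"
  shows "(\<Sum>i\<in>I. \<Sum>k\<in>I. F i k) = 0"
proof -
  have "(\<Sum>i\<in>I. \<Sum>k\<in>I. F i k) = (\<Sum>k\<in>I. \<Sum>i\<in>I. F i k)" by (rule sum.swap)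
  also have "\<dots> = (\<Sum>k\<in>I. \<Sum>i\<in>I. - F k i)" by (intro sum.cong refl assms)
  also have "\<dots> = - (\<Sum>i\<in>I. \<Sum>k\<in>I. F i k)" by (simp add: sum_negf)
  finally have "(\<Sum>i\<in>I. \<Sum>k\<in>I. F i k) + (\<Sum>i\<in>I. \<Sum>k\<in>I. F i k) = 0"
    by (metis add.right_inverse)
  then show ?thesis by (simp flip: scaleR_2)
qed

lemma double_sum_inner_alignment:
  fixes x y :: "'i \<Rightarrow> 'a::real_inner" and A :: "'i \<Rightarrow> 'i \<Rightarrow> real" and c :: real and I :: "'i set"
  assumes A_sym: "\<And>i k. A k i = A i k"
  defines "w \<equiv> \<lambda>i. c *\<^sub>R (\<Sum>k\<in>I. A i k *\<^sub>R (y k - y i))"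
  shows "(\<Sum>i\<in>I. \<Sum>j\<in>I. (x i - x j) \<bullet> (w i - w j))
    = - real (card I) * c * (\<Sum>i\<in>I. \<Sum>k\<in>I. A i k * ((x k - x i) \<bullet> (y k - y i)))"
proof -
  have "(\<Sum>i\<in>I. \<Sum>k\<in>I. A i k *\<^sub>R (y k - y i)) = 0"
    by (rule double_sum_antisym_eq_0) (simp add: A_sym algebra_simps)
  then have sum_w: "(\<Sum>i\<in>I. w i) = 0"
    by (simp add: w_def flip: scaleR_sum_right)
  have "(\<Sum>i\<in>I. \<Sum>j\<in>I. (x i - x j) \<bullet> (w i - w j))
      = (\<Sum>i\<in>I. \<Sum>j\<in>I. x i \<bullet> w i) - (\<Sum>i\<in>I. \<Sum>j\<in>I. x i \<bullet> w j)
        - (\<Sum>i\<in>I. \<Sum>j\<in>I. x j \<bullet> w i) + (\<Sum>i\<in>I. \<Sum>j\<in>I. x j \<bullet> w j)"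
    by (simp add: inner_diff_left inner_diff_right sum_subtractf sum.distrib)
  also have "\<dots> = 2 * real (card I) * (\<Sum>i\<in>I. x i \<bullet> w i)"
    using sum_w by (simp add: sum_distrib_left mult.assoc flip: inner_sum_left inner_sum_right)
  also have "(\<Sum>i\<in>I. x i \<bullet> w i) = c * (\<Sum>i\<in>I. \<Sum>k\<in>I. A i k * (x i \<bullet> (y k - y i)))"
    by (simp add: w_def inner_sum_right sum_distrib_left)
  also have "(\<Sum>i\<in>I. \<Sum>k\<in>I. A i k * (x i \<bullet> (y k - y i)))
      = - (\<Sum>i\<in>I. \<Sum>k\<in>I. A i k * ((x k - x i) \<bullet> (y k - y i))) / 2"
  proof -
    have "(\<Sum>i\<in>I. \<Sum>k\<in>I. A i k * ((x i + x k) \<bullet> (y k - y i))) = 0"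
      by (rule double_sum_antisym_eq_0) (simp add: A_sym inner_diff_right add.commute right_diff_distrib)
    moreover have "A i k * ((x i + x k) \<bullet> (y k - y i))
        = 2 * (A i k * (x i \<bullet> (y k - y i))) + A i k * ((x k - x i) \<bullet> (y k - y i))" for i k
      by (simp add: inner_add_left inner_diff_left algebra_simps)
    ultimately show ?thesis
      by (simp add: sum.distrib flip: sum_distrib_left)
  qed
  finally show ?thesis by simp
qed

section \<open>Primitives of nonnegative functions on a half-line\<close>

lemma has_real_derivative_integral_upper:
  fixes f :: "real \<Rightarrow> real"
  assumes "continuous_on {a..} f" and "a < x"
  shows "((\<lambda>y. integral {a..y} f) has_real_derivative f x) (at x)"
proof -
  have "((\<lambda>y. integral {a..y} f) has_real_derivative f x) (at x within {a..x + 1})"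
    using assms by (intro integral_has_real_derivative) (auto intro: continuous_on_subset)
  moreover have "x \<in> interior {a..x + 1}" using assms(2) by simp
  ultimately show ?thesis by (simp only: at_within_interior)
qed

lemma integral_upper_diff:
  fixes f :: "real \<Rightarrow> real"
  assumes "continuous_on {a..} f" and "a \<le> x" "x \<le> y"
  shows "integral {a..y} f - integral {a..x} f = integral {x..y} f"
proof -
  have "f integrable_on {a..y}"
    using assms by (intro integrable_continuous_interval) (auto intro: continuous_on_subset)
  then have "integral {a..x} f + integral {x..y} f = integral {a..y} f"
    by (rule Henstock_Kurzweil_Integration.integral_combine[OF assms(2,3)])
  then show ?thesis by simp
qed

lemma integral_atLeastAtMost_nonneg:
  fixes f :: "real \<Rightarrow> real"
  assumes "continuous_on {a..} f" and "\<And>r. a \<le> r \<Longrightarrow> 0 \<le> f r" and "a \<le> x"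
  shows "0 \<le> integral {x..y} f"
proof (cases "x \<le> y")
  case True
  then have "f integrable_on {x..y}"
    using assms by (intro integrable_continuous_interval) (auto intro: continuous_on_subset)
  then show ?thesis using assms by (intro integral_nonneg) auto
qed simp

lemma integral_upper_mono:
  fixes f :: "real \<Rightarrow> real"
  assumes "continuous_on {a..} f" and "\<And>r. a \<le> r \<Longrightarrow> 0 \<le> f r" and "a \<le> x" "x \<le> y"
  shows "integral {a..x} f \<le> integral {a..y} f"
  using integral_atLeastAtMost_nonneg[OF assms(1-3), of y] integral_upper_diff[OF assms(1,3,4)]
  by linarith

lemma integral_upper_diff_le:
  fixes f :: "real \<Rightarrow> real"
  assumes "continuous_on {a..} f" and "\<And>r. a \<le> r \<Longrightarrow> f r \<le> B" and "a \<le> x" "x \<le> y"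
  shows "integral {a..y} f - integral {a..x} f \<le> B * (y - x)"
proof -
  have "f integrable_on {x..y}"
    using assms by (intro integrable_continuous_interval) (auto intro: continuous_on_subset)
  then show ?thesis
    using assms integral_le[of f "{x..y}" "\<lambda>_. B"] integral_upper_diff[OF assms(1,3,4)]
    by (simp add: integrable_const_ivl mult.commute)
qed

lemma nn_integral_atLeast_eq_SUP_integral:
  fixes f :: "real \<Rightarrow> real"
  assumes cont: "continuous_on {a..} f" and nonneg: "\<And>x. a \<le> x \<Longrightarrow> 0 \<le> f x"
  shows "(\<integral>\<^sup>+x\<in>{a..}. ennreal (f x) \<partial>lborel) = (SUP n::nat. ennreal (integral {a..a + real n} f))"
proof -
  define F where "F n x = ennreal (f x) * indicator {a..a + real n} x" for n :: nat and x
  have F_eq: "F n x = ennreal (indicator {a..a + real n} x *\<^sub>R f x)" for n x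
    by (simp add: F_def indicator_def)
  have "(SUP n. F n x) = ennreal (f x) * indicator {a..} x" for x
  proof (rule LIMSEQ_unique[OF LIMSEQ_SUP])
    obtain n where "x - a < real n" using reals_Archimedean2 by blast
    then have "\<forall>\<^sub>F m in sequentially. F m x = ennreal (f x) * indicator {a..} x"
      by (auto simp: F_def frequently_def intro!: eventually_sequentiallyI[of n] split: split_indicator)
    then show "(\<lambda>n. F n x) \<longlonglongrightarrow> ennreal (f x) * indicator {a..} x"
      by (rule tendsto_eventually)
    show "incseq (\<lambda>n. F n x)"
      using nonneg by (auto simp: F_def incseq_def split: split_indicator)
  qed
  then have "(\<integral>\<^sup>+x\<in>{a..}. ennreal (f x) \<partial>lborel) = (\<integral>\<^sup>+x. (SUP n. F n x) \<partial>lborel)"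
    by simp
  also have "\<dots> = (SUP n. \<integral>\<^sup>+x. F n x \<partial>lborel)"
  proof (rule nn_integral_monotone_convergence_SUP)
    show "incseq F"
      using nonneg by (auto simp: F_def incseq_def le_fun_def split: split_indicator)
    have "(\<lambda>x. indicator {a..a + real n} x *\<^sub>R f x) \<in> borel_measurable borel" for n
      using cont by (intro borel_measurable_continuous_on_indicator) (auto intro: continuous_on_subset)
    then show "F n \<in> borel_measurable lborel" for n
      unfolding F_eq by simp
  qed
  also have "\<dots> = (SUP n::nat. ennreal (integral {a..a + real n} f))"
  proof (rule SUP_cong[OF refl])
    fix n :: nat
    have "f integrable_on {a..a + real n}"
      using cont by (intro integrable_continuous_interval) (auto intro: continuous_on_subset)
    then show "(\<integral>\<^sup>+x. F n x \<partial>lborel) = ennreal (integral {a..a + real n} f)"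
      unfolding F_def using nonneg
      by (intro nn_integral_has_integral_lebesgue') (auto simp: has_integral_integral)
  qed
  finally show ?thesis .
qed

lemma nn_integral_atLeast_eq_top_shift:
  fixes f :: "real \<Rightarrow> real"
  assumes cont: "continuous_on {a..} f" and nonneg: "\<And>x. a \<le> x \<Longrightarrow> 0 \<le> f x"
    and top: "(\<integral>\<^sup>+x\<in>{a..}. ennreal (f x) \<partial>lborel) = \<infinity>" and "a \<le> b"
  shows "(\<integral>\<^sup>+x\<in>{b..}. ennreal (f x) \<partial>lborel) = \<infinity>"
proof -
  have cont_b: "continuous_on {b..} f" by (rule continuous_on_subset[OF cont]) (use \<open>a \<le> b\<close> in auto)
  have nonneg_b: "\<And>x. b \<le> x \<Longrightarrow> 0 \<le> f x" using nonneg \<open>a \<le> b\<close> by simp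
  have "ennreal (integral {a..a + real n} f)
      \<le> ennreal (integral {a..b} f) + (\<integral>\<^sup>+x\<in>{b..}. ennreal (f x) \<partial>lborel)" for n
  proof -
    have "integral {a..a + real n} f \<le> integral {a..b + real n} f"
      using \<open>a \<le> b\<close> by (intro integral_upper_mono[OF cont nonneg]) auto
    also have "\<dots> = integral {a..b} f + integral {b..b + real n} f"
      using integral_upper_diff[OF cont \<open>a \<le> b\<close>, of "b + real n"] by simp
    finally have "ennreal (integral {a..a + real n} f)
        \<le> ennreal (integral {a..b} f) + ennreal (integral {b..b + real n} f)"
      using integral_atLeastAtMost_nonneg[OF cont nonneg, of a b]
        integral_atLeastAtMost_nonneg[OF cont nonneg, of b "b + real n"] \<open>a \<le> b\<close>
      by (simp add: ennreal_leI flip: ennreal_plus)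
    also have "\<dots> \<le> ennreal (integral {a..b} f) + (\<integral>\<^sup>+x\<in>{b..}. ennreal (f x) \<partial>lborel)"
      using SUP_upper[of n UNIV "\<lambda>n. ennreal (integral {b..b + real n} f)"]
      by (simp add: nn_integral_atLeast_eq_SUP_integral[OF cont_b nonneg_b] add_left_mono)
    finally show ?thesis .
  qed
  then have "(SUP n::nat. ennreal (integral {a..a + real n} f))
      \<le> ennreal (integral {a..b} f) + (\<integral>\<^sup>+x\<in>{b..}. ennreal (f x) \<partial>lborel)"
    by (rule SUP_least)
  then have "(\<integral>\<^sup>+x\<in>{a..}. ennreal (f x) \<partial>lborel)
      \<le> ennreal (integral {a..b} f) + (\<integral>\<^sup>+x\<in>{b..}. ennreal (f x) \<partial>lborel)"
    using nn_integral_atLeast_eq_SUP_integral[OF cont nonneg] by simp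
  then show ?thesis using top by (simp add: top_unique)
qed

section \<open>A Lyapunov functional\<close>

text \<open>The regularisation by \<open>\<epsilon>\<close> keeps the square roots differentiable.\<close>

lemma lyapunov_derivative_bound:
  fixes E Y DE DY a b \<rho> P \<epsilon> :: real
  assumes "0 \<le> E" "0 \<le> Y" "0 < \<epsilon>" "0 \<le> a" "0 < b" "0 \<le> \<rho>" "\<rho> \<le> P"
    and DE: "DE \<le> - 2 * a * \<rho> * E" and DY: "DY \<le> 2 * b * sqrt Y * sqrt E"
  shows "DE / (2 * sqrt (E + \<epsilon>\<^sup>2)) + a / b * \<rho> * (DY / (2 * sqrt (Y + \<epsilon>\<^sup>2))) \<le> a * P * \<epsilon>"
proof -
  define V X where "V = sqrt (E + \<epsilon>\<^sup>2)" and "X = sqrt (Y + \<epsilon>\<^sup>2)"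
  have "\<epsilon> \<le> V" "sqrt E \<le> V" "sqrt Y \<le> X"
    using assms(1,2) by (auto simp: V_def X_def intro!: real_le_rsqrt real_sqrt_le_mono)
  have "0 < V" "0 < X" using assms(1-3) by (auto simp: V_def X_def intro: add_nonneg_pos)
  have "V\<^sup>2 = E + \<epsilon>\<^sup>2" using assms(1) by (simp add: V_def)
  have "DE / (2 * V) \<le> - a * \<rho> * (E / V)"
    using DE \<open>0 < V\<close> by (simp add: field_simps)
  also have "\<dots> \<le> - a * \<rho> * (V - \<epsilon>)"
  proof -
    have "(V - \<epsilon>) * V \<le> E"
      using \<open>V\<^sup>2 = E + \<epsilon>\<^sup>2\<close> \<open>\<epsilon> \<le> V\<close> assms(3) by (simp add: power2_eq_square algebra_simps)
    then have "V - \<epsilon> \<le> E / V" using \<open>0 < V\<close> by (simp add: field_simps)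
    then have "a * \<rho> * (V - \<epsilon>) \<le> a * \<rho> * (E / V)" by (rule mult_left_mono) (use assms(4,6) in auto)
    then show ?thesis by simp
  qed
  finally have dV: "DE / (2 * V) \<le> - a * \<rho> * (V - \<epsilon>)" .
  have "DY / (2 * X) \<le> b * sqrt E * (sqrt Y / X)"
    using DY \<open>0 < X\<close> by (simp add: field_simps)
  also have "\<dots> \<le> b * sqrt E * 1"
    using \<open>sqrt Y \<le> X\<close> \<open>0 < X\<close> assms(1,5) by (intro mult_left_mono) auto
  also have "\<dots> \<le> b * V"
    using \<open>sqrt E \<le> V\<close> assms(5) by simp
  finally have "a / b * \<rho> * (DY / (2 * X)) \<le> a / b * \<rho> * (b * V)"
    by (rule mult_left_mono) (use assms(4-6) in simp)
  with dV \<open>0 < b\<close> have "DE / (2 * V) + a / b * \<rho> * (DY / (2 * X)) \<le> a * \<rho> * \<epsilon>"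
    by (simp add: algebra_simps)
  also have "\<dots> \<le> a * P * \<epsilon>"
    using assms(3,4,7) by (intro mult_right_mono mult_left_mono) auto
  finally show ?thesis by (simp add: V_def X_def)
qed

lemma has_real_derivative_sqrt_add_power2:
  assumes "(f has_real_derivative f') (at t)" and "0 \<le> f t" and "0 < \<epsilon>"
  shows "((\<lambda>s. sqrt (f s + \<epsilon>\<^sup>2)) has_real_derivative f' / (2 * sqrt (f t + \<epsilon>\<^sup>2))) (at t)"
proof -
  have "0 < f t + \<epsilon>\<^sup>2" using assms(2,3) by (intro add_nonneg_pos) auto
  from DERIV_chain2[OF DERIV_real_sqrt[OF this] DERIV_add[OF assms(1) DERIV_const]]
  show ?thesis by (simp add: inverse_eq_divide mult.commute)
qed

lemma regularised_lyapunov_antimono: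
  fixes E Y DE DY \<psi> :: "real \<Rightarrow> real"
  assumes E: "continuous_on {0..} E" "\<And>t. 0 \<le> t \<Longrightarrow> 0 \<le> E t"
      "\<And>t. 0 < t \<Longrightarrow> (E has_real_derivative DE t) (at t)"
    and Y: "continuous_on {0..} Y" "\<And>t. 0 \<le> t \<Longrightarrow> 0 \<le> Y t"
      "\<And>t. 0 < t \<Longrightarrow> (Y has_real_derivative DY t) (at t)"
    and DE_le: "\<And>t r. 0 < t \<Longrightarrow> sqrt (Y t) \<le> r \<Longrightarrow> DE t \<le> - 2 * a * \<psi> r * E t"
    and DY_le: "\<And>t. 0 < t \<Longrightarrow> DY t \<le> 2 * b * sqrt (Y t) * sqrt (E t)"
    and \<psi>: "continuous_on {0..} \<psi>" "\<And>r. 0 \<le> r \<Longrightarrow> 0 \<le> \<psi> r" "\<And>r. 0 \<le> r \<Longrightarrow> \<psi> r \<le> P"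
    and "0 \<le> a" "0 < b" "0 < \<epsilon>" "0 \<le> t"
  shows "sqrt (E t + \<epsilon>\<^sup>2) + a / b * integral {0..sqrt (Y t + \<epsilon>\<^sup>2)} \<psi> - a * P * \<epsilon> * t
    \<le> sqrt (E 0 + \<epsilon>\<^sup>2) + a / b * integral {0..sqrt (Y 0 + \<epsilon>\<^sup>2)} \<psi>"
proof -
  define \<Psi> where "\<Psi> x = integral {0..x} \<psi>" for x
  define V X where "V = (\<lambda>s. sqrt (E s + \<epsilon>\<^sup>2))" and "X = (\<lambda>s. sqrt (Y s + \<epsilon>\<^sup>2))"
  have X_pos: "0 < X s" if "0 \<le> s" for s
    using Y(2)[OF that] \<open>0 < \<epsilon>\<close> by (simp add: X_def add_nonneg_pos)
  have \<Psi>_deriv: "(\<Psi> has_real_derivative \<psi> x) (at x)" if "0 < x" for x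
    unfolding \<Psi>_def using \<psi>(1) that by (rule has_real_derivative_integral_upper)
  have "V t + a / b * \<Psi> (X t) - a * P * \<epsilon> * t \<le> V 0 + a / b * \<Psi> (X 0) - a * P * \<epsilon> * 0"
  proof (rule DERIV_nonpos_imp_antimono_atLeast_0[OF _ _ _ order_refl \<open>0 \<le> t\<close>])
    have "continuous_on {0<..} \<Psi>"
      using \<Psi>_deriv by (intro continuous_at_imp_continuous_on) (auto intro: DERIV_isCont)
    moreover have "continuous_on {0..} X" using Y(1) by (auto simp: X_def intro!: continuous_intros)
    ultimately have "continuous_on {0..} (\<lambda>s. \<Psi> (X s))"
      using X_pos by (intro continuous_on_compose2[of "{0<..}" \<Psi> "{0..}" X]) auto
    then show "continuous_on {0..} (\<lambda>s. V s + a / b * \<Psi> (X s) - a * P * \<epsilon> * s)"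
      unfolding V_def using E(1) \<open>0 < b\<close> by (intro continuous_intros) auto
  next
    fix s :: real assume "0 < s"
    have dV: "(V has_real_derivative DE s / (2 * V s)) (at s)"
      unfolding V_def using E(2,3) \<open>0 < s\<close> \<open>0 < \<epsilon>\<close> by (intro has_real_derivative_sqrt_add_power2) auto
    have dX: "(X has_real_derivative DY s / (2 * X s)) (at s)"
      unfolding X_def using Y(2,3) \<open>0 < s\<close> \<open>0 < \<epsilon>\<close> by (intro has_real_derivative_sqrt_add_power2) auto
    have d\<Psi>X: "((\<lambda>s. \<Psi> (X s)) has_real_derivative \<psi> (X s) * (DY s / (2 * X s))) (at s)"
      using DERIV_chain2[OF \<Psi>_deriv[OF X_pos] dX] \<open>0 < s\<close> by simp
    show "((\<lambda>s. V s + a / b * \<Psi> (X s) - a * P * \<epsilon> * s) has_real_derivative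
        DE s / (2 * V s) + a / b * \<psi> (X s) * (DY s / (2 * X s)) - a * P * \<epsilon>) (at s)"
      using DERIV_diff[OF DERIV_add[OF dV DERIV_cmult[OF d\<Psi>X, of "a / b"]]
          DERIV_cmult[OF DERIV_ident, of "a * P * \<epsilon>"]]
      by (simp add: mult.assoc)
    have "0 \<le> s" "sqrt (Y s) \<le> X s" "0 \<le> X s" using \<open>0 < s\<close> X_pos[of s] by (simp_all add: X_def)
    from lyapunov_derivative_bound[OF E(2) Y(2) \<open>0 < \<epsilon>\<close> \<open>0 \<le> a\<close> \<open>0 < b\<close> \<psi>(2,3)
        DE_le[OF \<open>0 < s\<close> \<open>sqrt (Y s) \<le> X s\<close>] DY_le[OF \<open>0 < s\<close>], OF this(1,1,3,3)]
    show "DE s / (2 * V s) + a / b * \<psi> (X s) * (DY s / (2 * X s)) - a * P * \<epsilon> \<le> 0"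
      by (simp add: V_def X_def)
  qed
  then show ?thesis by (simp add: V_def X_def \<Psi>_def)
qed

lemma lyapunov_inequality:
  fixes E Y DE DY \<psi> :: "real \<Rightarrow> real"
  assumes E: "continuous_on {0..} E" "\<And>t. 0 \<le> t \<Longrightarrow> 0 \<le> E t"
      "\<And>t. 0 < t \<Longrightarrow> (E has_real_derivative DE t) (at t)"
    and Y: "continuous_on {0..} Y" "\<And>t. 0 \<le> t \<Longrightarrow> 0 \<le> Y t"
      "\<And>t. 0 < t \<Longrightarrow> (Y has_real_derivative DY t) (at t)"
    and DE_le: "\<And>t r. 0 < t \<Longrightarrow> sqrt (Y t) \<le> r \<Longrightarrow> DE t \<le> - 2 * a * \<psi> r * E t"
    and DY_le: "\<And>t. 0 < t \<Longrightarrow> DY t \<le> 2 * b * sqrt (Y t) * sqrt (E t)"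
    and \<psi>: "continuous_on {0..} \<psi>" "\<And>r. 0 \<le> r \<Longrightarrow> 0 \<le> \<psi> r" "\<And>r. 0 \<le> r \<Longrightarrow> \<psi> r \<le> P"
    and "0 \<le> a" "0 < b" "0 \<le> t"
  shows "sqrt (E t) + a / b * integral {0..sqrt (Y t)} \<psi>
    \<le> sqrt (E 0) + a / b * integral {0..sqrt (Y 0)} \<psi>"
proof (rule field_le_epsilon)
  define \<Psi> where "\<Psi> x = integral {0..x} \<psi>" for x
  have "0 \<le> P" using \<psi>(2,3)[of 0] by simp
  fix e :: real assume "0 < e"
  define \<epsilon> where "\<epsilon> = e / (1 + a / b * P + a * P * t)"
  have "0 < 1 + a / b * P + a * P * t"
    using \<open>0 \<le> P\<close> \<open>0 \<le> a\<close> \<open>0 < b\<close> \<open>0 \<le> t\<close> by (intro add_pos_nonneg) auto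
  then have "0 < \<epsilon>" and e_eq: "e = \<epsilon> * (1 + a / b * P + a * P * t)"
    using \<open>0 < e\<close> by (simp_all add: \<epsilon>_def)
  have ab: "0 \<le> a / b" using \<open>0 \<le> a\<close> \<open>0 < b\<close> by simp
  have "sqrt (E t) + a / b * \<Psi> (sqrt (Y t))
      \<le> sqrt (E t + \<epsilon>\<^sup>2) + a / b * \<Psi> (sqrt (Y t + \<epsilon>\<^sup>2))"
    using integral_upper_mono[OF \<psi>(1,2), of "sqrt (Y t)" "sqrt (Y t + \<epsilon>\<^sup>2)"] ab Y(2)[OF \<open>0 \<le> t\<close>]
    by (intro add_mono mult_left_mono) (auto simp: \<Psi>_def)
  also have "\<dots> \<le> sqrt (E 0 + \<epsilon>\<^sup>2) + a / b * \<Psi> (sqrt (Y 0 + \<epsilon>\<^sup>2)) + a * P * \<epsilon> * t"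
    using regularised_lyapunov_antimono[OF E Y DE_le DY_le \<psi> \<open>0 \<le> a\<close> \<open>0 < b\<close> \<open>0 < \<epsilon>\<close> \<open>0 \<le> t\<close>]
    by (simp add: \<Psi>_def)
  also have "\<dots> \<le> (sqrt (E 0) + \<epsilon>) + a / b * (\<Psi> (sqrt (Y 0)) + P * \<epsilon>) + a * P * \<epsilon> * t"
  proof -
    have sqrt_le: "sqrt (x + \<epsilon>\<^sup>2) \<le> sqrt x + \<epsilon>" if "0 \<le> x" for x
      using sqrt_add_le_add_sqrt[OF that, of "\<epsilon>\<^sup>2"] \<open>0 < \<epsilon>\<close> by simp
    have "\<Psi> (sqrt (Y 0 + \<epsilon>\<^sup>2)) - \<Psi> (sqrt (Y 0)) \<le> P * (sqrt (Y 0 + \<epsilon>\<^sup>2) - sqrt (Y 0))"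
      unfolding \<Psi>_def by (rule integral_upper_diff_le[OF \<psi>(1,3)]) (use Y(2)[of 0] in auto)
    also have "\<dots> \<le> P * \<epsilon>"
      using sqrt_le[OF Y(2)[of 0]] \<open>0 \<le> P\<close> by (intro mult_left_mono) auto
    finally have "a / b * \<Psi> (sqrt (Y 0 + \<epsilon>\<^sup>2)) \<le> a / b * (\<Psi> (sqrt (Y 0)) + P * \<epsilon>)"
      using ab by (intro mult_left_mono) auto
    then show ?thesis using sqrt_le[OF E(2)[of 0]] by simp
  qed
  also have "\<dots> = sqrt (E 0) + a / b * \<Psi> (sqrt (Y 0)) + e"
    unfolding e_eq by (simp add: algebra_simps)
  finally show "sqrt (E t) + a / b * integral {0..sqrt (Y t)} \<psi>
      \<le> sqrt (E 0) + a / b * integral {0..sqrt (Y 0)} \<psi> + e"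
    by (simp add: \<Psi>_def)
qed

section \<open>The velocity control\<close>

lemma vel_ctrl_eq_scaleR: "vel_ctrl g v = (g (norm v) / norm v) *\<^sub>R v"
  by (simp add: vel_ctrl_def divide_inverse_commute)

lemma inner_vel_ctrl_self: "v \<bullet> vel_ctrl g v = norm v * g (norm v)"
  by (simp add: vel_ctrl_eq_scaleR power2_norm_eq_inner[symmetric] power2_eq_square)

lemma inner_vel_ctrl_le:
  assumes "0 \<le> g (norm x)"
  shows "y \<bullet> vel_ctrl g x \<le> norm y * g (norm x)"
proof -
  have "y \<bullet> vel_ctrl g x = g (norm x) / norm x * (y \<bullet> x)"
    by (simp add: vel_ctrl_eq_scaleR)
  also have "\<dots> \<le> g (norm x) / norm x * (norm y * norm x)"
    using assms by (intro mult_left_mono Cauchy_Schwarz_ineq2[THEN abs_le_D1]) auto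
  also have "\<dots> \<le> norm y * g (norm x)"
    using assms by (cases "x = 0") auto
  finally show ?thesis .
qed

lemma nonneg_affine_if_nonneg_at_bounds:
  fixes u v c r :: real
  assumes "\<bar>c\<bar> \<le> r" and "0 \<le> u - r * v" and "0 \<le> u + r * v"
  shows "0 \<le> u - c * v"
proof (cases "r = 0")
  case False
  then have "0 < r" using assms(1) by linarith
  have "0 \<le> r + c" "0 \<le> r - c" using assms(1) by auto
  then have "0 \<le> (r + c) * (u - r * v) + (r - c) * (u + r * v)"
    using assms(2,3) by (metis add_nonneg_nonneg mult_nonneg_nonneg)
  also have "\<dots> = (2 * r) * (u - c * v)" by (simp add: algebra_simps)
  finally show ?thesis using \<open>0 < r\<close> by (simp add: zero_le_mult_iff)
qed (use assms in simp)

lemma norm_scaleR_diff_power2: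
  fixes x y :: "'a::real_inner"
  shows "(norm (\<alpha> *\<^sub>R x - \<beta> *\<^sub>R y))\<^sup>2
    = \<alpha>\<^sup>2 * (norm x)\<^sup>2 + \<beta>\<^sup>2 * (norm y)\<^sup>2 - 2 * \<alpha> * \<beta> * (x \<bullet> y)"
  unfolding power2_norm_eq_inner
  by (simp add: inner_diff_left inner_diff_right inner_commute[of y x] power2_eq_square algebra_simps)

lemma inner_scaleR_diff:
  fixes x y :: "'a::real_inner"
  shows "(x - y) \<bullet> (\<alpha> *\<^sub>R x - \<beta> *\<^sub>R y)
    = \<alpha> * (norm x)\<^sup>2 + \<beta> * (norm y)\<^sup>2 - (\<alpha> + \<beta>) * (x \<bullet> y)"
  unfolding power2_norm_eq_inner
  by (simp add: inner_diff_left inner_diff_right inner_commute[of y x] algebra_simps)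

text \<open>
  Once \<open>norm x\<close> and \<open>norm y\<close> are fixed, both inequalities below are affine in \<open>c = x \<bullet> y\<close>, so
  it suffices to check them at \<open>c = \<plusminus>norm x * norm y\<close>, that is for collinear \<open>x\<close> and \<open>y\<close>,
  where they are one-dimensional statements about \<open>g\<close>.
\<close>

lemma vel_ctrl_strongly_monotone_collinear:
  fixes g :: "real \<Rightarrow> real"
  assumes g0: "g 0 = 0"
    and slope: "\<And>s t. 0 \<le> s \<Longrightarrow> s \<le> t \<Longrightarrow> t \<le> R \<Longrightarrow> m * (t - s) \<le> g t - g s"
    and ab: "0 \<le> a" "0 \<le> b" "a \<le> R" "b \<le> R"
  shows "m * (a - b)\<^sup>2 \<le> (g a - g b) * (a - b)"
    and "m * (a + b)\<^sup>2 \<le> (g a + g b) * (a + b)"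
proof -
  show "m * (a - b)\<^sup>2 \<le> (g a - g b) * (a - b)"
  proof (cases "a \<le> b")
    case True
    then have "m * (b - a) * (b - a) \<le> (g b - g a) * (b - a)"
      using slope[of a b] ab by (intro mult_right_mono) auto
    then show ?thesis by (simp add: power2_eq_square algebra_simps)
  next
    case False
    then have "m * (a - b) * (a - b) \<le> (g a - g b) * (a - b)"
      using slope[of b a] ab by (intro mult_right_mono) auto
    then show ?thesis by (simp add: power2_eq_square)
  qed
  have "m * a \<le> g a" "m * b \<le> g b" using slope[of 0 a] slope[of 0 b] ab g0 by simp_all
  then have "m * (a + b) \<le> g a + g b" by (simp add: distrib_left add_mono)
  then have "m * (a + b) * (a + b) \<le> (g a + g b) * (a + b)"
    using ab by (intro mult_right_mono) auto
  then show "m * (a + b)\<^sup>2 \<le> (g a + g b) * (a + b)" by (simp add: power2_eq_square)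
qed

lemma vel_ctrl_lipschitz_collinear:
  fixes g :: "real \<Rightarrow> real"
  assumes g0: "g 0 = 0" and mono: "mono_on {0..R} g" and lip: "M-lipschitz_on {0..R} g"
    and ab: "a \<in> {0..R}" "b \<in> {0..R}"
  shows "(g a - g b)\<^sup>2 \<le> M\<^sup>2 * (a - b)\<^sup>2"
    and "(g a + g b)\<^sup>2 \<le> M\<^sup>2 * (a + b)\<^sup>2"
proof -
  have "\<bar>g a - g b\<bar> \<le> M * \<bar>a - b\<bar>"
    using lipschitz_onD[OF lip ab] by (simp add: dist_real_def)
  then show "(g a - g b)\<^sup>2 \<le> M\<^sup>2 * (a - b)\<^sup>2"
    by (metis abs_ge_zero power2_abs power_mono power_mult_distrib)
  have "0 \<in> {0..R}" using ab by auto
  then have "0 \<le> g a" "0 \<le> g b"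
    using mono_onD[OF mono \<open>0 \<in> {0..R}\<close> ab(1)] mono_onD[OF mono \<open>0 \<in> {0..R}\<close> ab(2)] ab g0
    by auto
  moreover have "g a \<le> M * a" "g b \<le> M * b"
    using lipschitz_onD[OF lip ab(1) \<open>0 \<in> {0..R}\<close>] lipschitz_onD[OF lip ab(2) \<open>0 \<in> {0..R}\<close>] ab g0
    by (simp_all add: dist_real_def)
  ultimately have "(g a + g b)\<^sup>2 \<le> (M * (a + b))\<^sup>2"
    by (intro power_mono) (auto simp: algebra_simps)
  then show "(g a + g b)\<^sup>2 \<le> M\<^sup>2 * (a + b)\<^sup>2" by (simp add: power_mult_distrib)
qed

lemma vel_ctrl_strongly_monotone:
  fixes x y :: "'a::real_inner"
  assumes g0: "g 0 = 0"
    and slope: "\<And>s t. 0 \<le> s \<Longrightarrow> s \<le> t \<Longrightarrow> t \<le> R \<Longrightarrow> m * (t - s) \<le> g t - g s"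
    and "norm x \<le> R" "norm y \<le> R"
  shows "m * (norm (x - y))\<^sup>2 \<le> (x - y) \<bullet> (vel_ctrl g x - vel_ctrl g y)"
proof -
  define a b c where "a = norm x" and "b = norm y" and "c = x \<bullet> y"
  define \<alpha> \<beta> where "\<alpha> = g a / a" and "\<beta> = g b / b"
  have ga: "g a = \<alpha> * a" and gb: "g b = \<beta> * b" using g0 by (auto simp: \<alpha>_def \<beta>_def)
  have Gx: "vel_ctrl g x = \<alpha> *\<^sub>R x" and Gy: "vel_ctrl g y = \<beta> *\<^sub>R y"
    unfolding \<alpha>_def \<beta>_def a_def b_def by (rule vel_ctrl_eq_scaleR)+
  have "0 \<le> a" "0 \<le> b" "a \<le> R" "b \<le> R" using assms by (auto simp: a_def b_def)
  note collinear = vel_ctrl_strongly_monotone_collinear[OF g0 slope this]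
  have "0 \<le> (\<alpha> * a\<^sup>2 + \<beta> * b\<^sup>2 - m * (a\<^sup>2 + b\<^sup>2)) - c * (\<alpha> + \<beta> - 2 * m)"
  proof (rule nonneg_affine_if_nonneg_at_bounds)
    show "\<bar>c\<bar> \<le> a * b" unfolding a_def b_def c_def by (rule Cauchy_Schwarz_ineq2)
    have "\<alpha> * a\<^sup>2 + \<beta> * b\<^sup>2 - m * (a\<^sup>2 + b\<^sup>2) - a * b * (\<alpha> + \<beta> - 2 * m)
        = (g a - g b) * (a - b) - m * (a - b)\<^sup>2"
      "\<alpha> * a\<^sup>2 + \<beta> * b\<^sup>2 - m * (a\<^sup>2 + b\<^sup>2) + a * b * (\<alpha> + \<beta> - 2 * m)
        = (g a + g b) * (a + b) - m * (a + b)\<^sup>2"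
      unfolding ga gb by (simp_all add: power2_eq_square algebra_simps)
    with collinear show "0 \<le> \<alpha> * a\<^sup>2 + \<beta> * b\<^sup>2 - m * (a\<^sup>2 + b\<^sup>2) - a * b * (\<alpha> + \<beta> - 2 * m)"
      "0 \<le> \<alpha> * a\<^sup>2 + \<beta> * b\<^sup>2 - m * (a\<^sup>2 + b\<^sup>2) + a * b * (\<alpha> + \<beta> - 2 * m)"
      by linarith+
  qed
  then have "m * (a\<^sup>2 + b\<^sup>2 - 2 * c) \<le> \<alpha> * a\<^sup>2 + \<beta> * b\<^sup>2 - (\<alpha> + \<beta>) * c"
    by (simp add: algebra_simps)
  moreover have "(x - y) \<bullet> (vel_ctrl g x - vel_ctrl g y) = \<alpha> * a\<^sup>2 + \<beta> * b\<^sup>2 - (\<alpha> + \<beta>) * c"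
    unfolding Gx Gy a_def b_def c_def by (rule inner_scaleR_diff)
  moreover have "(norm (x - y))\<^sup>2 = a\<^sup>2 + b\<^sup>2 - 2 * c"
    using norm_scaleR_diff_power2[of 1 x 1 y] by (simp add: a_def b_def c_def)
  ultimately show ?thesis by simp
qed

lemma vel_ctrl_lipschitz:
  fixes x y :: "'a::real_inner"
  assumes g0: "g 0 = 0" and mono: "mono_on {0..R} g" and lip: "M-lipschitz_on {0..R} g"
    and "norm x \<le> R" "norm y \<le> R"
  shows "norm (vel_ctrl g x - vel_ctrl g y) \<le> M * norm (x - y)"
proof -
  define a b c where "a = norm x" and "b = norm y" and "c = x \<bullet> y"
  define \<alpha> \<beta> where "\<alpha> = g a / a" and "\<beta> = g b / b"
  have ga: "g a = \<alpha> * a" and gb: "g b = \<beta> * b" using g0 by (auto simp: \<alpha>_def \<beta>_def)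
  have Gx: "vel_ctrl g x = \<alpha> *\<^sub>R x" and Gy: "vel_ctrl g y = \<beta> *\<^sub>R y"
    unfolding \<alpha>_def \<beta>_def a_def b_def by (rule vel_ctrl_eq_scaleR)+
  have "a \<in> {0..R}" "b \<in> {0..R}" using assms by (auto simp: a_def b_def)
  note collinear = vel_ctrl_lipschitz_collinear[OF g0 mono lip this]
  have "0 \<le> (M\<^sup>2 * (a\<^sup>2 + b\<^sup>2) - \<alpha>\<^sup>2 * a\<^sup>2 - \<beta>\<^sup>2 * b\<^sup>2) - c * (2 * M\<^sup>2 - 2 * \<alpha> * \<beta>)"
  proof (rule nonneg_affine_if_nonneg_at_bounds)
    show "\<bar>c\<bar> \<le> a * b" unfolding a_def b_def c_def by (rule Cauchy_Schwarz_ineq2)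
    have "M\<^sup>2 * (a\<^sup>2 + b\<^sup>2) - \<alpha>\<^sup>2 * a\<^sup>2 - \<beta>\<^sup>2 * b\<^sup>2 - a * b * (2 * M\<^sup>2 - 2 * \<alpha> * \<beta>)
        = M\<^sup>2 * (a - b)\<^sup>2 - (g a - g b)\<^sup>2"
      "M\<^sup>2 * (a\<^sup>2 + b\<^sup>2) - \<alpha>\<^sup>2 * a\<^sup>2 - \<beta>\<^sup>2 * b\<^sup>2 + a * b * (2 * M\<^sup>2 - 2 * \<alpha> * \<beta>)
        = M\<^sup>2 * (a + b)\<^sup>2 - (g a + g b)\<^sup>2"
      unfolding ga gb by (simp_all add: power2_eq_square algebra_simps)
    with collinear show "0 \<le> M\<^sup>2 * (a\<^sup>2 + b\<^sup>2) - \<alpha>\<^sup>2 * a\<^sup>2 - \<beta>\<^sup>2 * b\<^sup>2 - a * b * (2 * M\<^sup>2 - 2 * \<alpha> * \<beta>)"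
      "0 \<le> M\<^sup>2 * (a\<^sup>2 + b\<^sup>2) - \<alpha>\<^sup>2 * a\<^sup>2 - \<beta>\<^sup>2 * b\<^sup>2 + a * b * (2 * M\<^sup>2 - 2 * \<alpha> * \<beta>)"
      by linarith+
  qed
  then have "\<alpha>\<^sup>2 * a\<^sup>2 + \<beta>\<^sup>2 * b\<^sup>2 - 2 * \<alpha> * \<beta> * c \<le> M\<^sup>2 * (a\<^sup>2 + b\<^sup>2 - 2 * c)"
    by (simp add: algebra_simps)
  moreover have "(norm (vel_ctrl g x - vel_ctrl g y))\<^sup>2 = \<alpha>\<^sup>2 * a\<^sup>2 + \<beta>\<^sup>2 * b\<^sup>2 - 2 * \<alpha> * \<beta> * c"
    unfolding Gx Gy a_def b_def c_def by (rule norm_scaleR_diff_power2)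
  moreover have "(norm (x - y))\<^sup>2 = a\<^sup>2 + b\<^sup>2 - 2 * c"
    using norm_scaleR_diff_power2[of 1 x 1 y] by (simp add: a_def b_def c_def)
  ultimately have "(norm (vel_ctrl g x - vel_ctrl g y))\<^sup>2 \<le> M\<^sup>2 * (norm (x - y))\<^sup>2"
    by simp
  then have "(norm (vel_ctrl g x - vel_ctrl g y))\<^sup>2 \<le> (M * norm (x - y))\<^sup>2"
    by (simp add: power_mult_distrib)
  moreover have "0 \<le> M" using lip by (rule lipschitz_on_nonneg)
  ultimately show ?thesis by (auto intro: power2_le_imp_le)
qed

section \<open>Configurations and solutions of the model\<close>

definition cfg_sqnorm :: "nat \<Rightarrow> (nat \<Rightarrow> 'a::real_normed_vector) \<Rightarrow> real" where
  "cfg_sqnorm N x = (\<Sum>i\<in>{1..N}. \<Sum>j\<in>{1..N}. (norm (x i - x j))\<^sup>2)"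

lemma cfg_norm_eq_sqrt_cfg_sqnorm: "cfg_norm N x = sqrt (cfg_sqnorm N x)"
  by (simp add: cfg_norm_def cfg_sqnorm_def)

lemma cfg_sqnorm_nonneg: "0 \<le> cfg_sqnorm N x"
  unfolding cfg_sqnorm_def by (intro sum_nonneg) auto

lemma cfg_sqnorm_cong: "(\<And>i. i \<in> {1..N} \<Longrightarrow> x i = y i) \<Longrightarrow> cfg_sqnorm N x = cfg_sqnorm N y"
  unfolding cfg_sqnorm_def by (intro sum.cong refl) auto

lemma norm_diff_le_cfg_norm:
  assumes "i \<in> {1..N}" "j \<in> {1..N}"
  shows "norm (x i - x j) \<le> cfg_norm N x"
proof -
  have "(norm (x i - x j))\<^sup>2 \<le> (\<Sum>j'\<in>{1..N}. (norm (x i - x j'))\<^sup>2)"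
    by (rule member_le_sum[OF assms(2)]) auto
  also have "\<dots> \<le> cfg_sqnorm N x"
    unfolding cfg_sqnorm_def by (rule member_le_sum[OF assms(1)]) (auto intro: sum_nonneg)
  finally show ?thesis
    unfolding cfg_norm_eq_sqrt_cfg_sqnorm by (rule real_le_rsqrt)
qed

lemma cfg_diam_eq_Max: "cfg_diam N x = Max ((\<lambda>(i, j). norm (x i - x j)) ` ({1..N} \<times> {1..N}))"
  unfolding cfg_diam_def by (rule arg_cong[where f = Max]) (fastforce simp: image_iff)

lemma norm_diff_le_cfg_diam:
  assumes "i \<in> {1..N}" "j \<in> {1..N}"
  shows "norm (x i - x j) \<le> cfg_diam N x"
  unfolding cfg_diam_eq_Max by (rule Max_ge) (use assms in auto)

lemma cfg_diam_le:
  assumes "N \<ge> 1" and "\<And>i j. i \<in> {1..N} \<Longrightarrow> j \<in> {1..N} \<Longrightarrow> norm (x i - x j) \<le> D"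
  shows "cfg_diam N x \<le> D"
  unfolding cfg_diam_eq_Max using assms by (subst Max_le_iff) auto

lemma cfg_diam_nonneg: "N \<ge> 1 \<Longrightarrow> 0 \<le> cfg_diam N x"
  using norm_diff_le_cfg_diam[of 1 N 1 x] by simp

lemma cfg_diam_le_cfg_norm: "N \<ge> 1 \<Longrightarrow> cfg_diam N x \<le> cfg_norm N x"
  by (rule cfg_diam_le) (auto intro: norm_diff_le_cfg_norm)

locale cucker_smale_vc =
  fixes N :: nat and \<kappa> :: real
    and g g' \<psi> :: "real \<Rightarrow> real"
    and q0 p0 :: "nat \<Rightarrow> 'a::euclidean_space"
    and q p :: "nat \<Rightarrow> real \<Rightarrow> 'a"
  assumes N: "N \<ge> 1" and kappa: "\<kappa> > 0"
    and g_deriv: "\<And>r. r \<ge> 0 \<Longrightarrow> (g has_real_derivative g' r) (at r within {0..})"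
    and g0: "g 0 = 0"
    and g'_bounds: "\<And>b. b \<ge> 0 \<Longrightarrow> \<exists>m M. 0 < m \<and> (\<forall>r\<in>{0..b}. m \<le> g' r \<and> g' r \<le> M)"
    and psi_pos: "\<And>r. r \<ge> 0 \<Longrightarrow> \<psi> r > 0"
    and psi_bdd: "bounded (\<psi> ` {0..})"
    and psi_lip: "\<exists>L. L-lipschitz_on {0..} \<psi>"
    and psi_noninc: "\<And>r s. r \<ge> 0 \<Longrightarrow> s \<ge> 0 \<Longrightarrow> (\<psi> r - \<psi> s) * (r - s) \<le> 0"
    and sol: "CSVC_solution N \<kappa> g \<psi> q0 p0 q p"
begin

abbreviation vel :: "nat \<Rightarrow> real \<Rightarrow> 'a" where
  "vel i t \<equiv> vel_ctrl g (p i t)"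

abbreviation force :: "nat \<Rightarrow> real \<Rightarrow> 'a" where
  "force i t \<equiv> (\<kappa> / real N) *\<^sub>R (\<Sum>k\<in>{1..N}. \<psi> (norm (q k t - q i t)) *\<^sub>R (vel k t - vel i t))"

lemma q_init: "i \<in> {1..N} \<Longrightarrow> q i 0 = q0 i"
  and p_init: "i \<in> {1..N} \<Longrightarrow> p i 0 = p0 i"
  and q_cont: "i \<in> {1..N} \<Longrightarrow> continuous_on {0..} (q i)"
  and p_cont: "i \<in> {1..N} \<Longrightarrow> continuous_on {0..} (p i)"
  and q_deriv: "i \<in> {1..N} \<Longrightarrow> t > 0 \<Longrightarrow> (q i has_vector_derivative vel i t) (at t)"
  and p_deriv: "i \<in> {1..N} \<Longrightarrow> t > 0 \<Longrightarrow> (p i has_vector_derivative force i t) (at t)"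
  using sol by (simp_all add: CSVC_solution_def)

lemma psi_nonneg: "0 \<le> r \<Longrightarrow> 0 \<le> \<psi> r"
  using psi_pos[of r] by simp

lemma psi_antimono: "0 \<le> r \<Longrightarrow> r \<le> s \<Longrightarrow> \<psi> s \<le> \<psi> r"
  using psi_noninc[of r s] by (cases "r = s") (auto simp: mult_le_0_iff)

lemma psi_cont: "continuous_on {0..} \<psi>"
  using psi_lip lipschitz_on_continuous_on by blast

lemma psi_bounded: obtains P where "\<And>r. 0 \<le> r \<Longrightarrow> \<psi> r \<le> P"
proof -
  obtain P where P: "\<forall>x\<in>\<psi> ` {0..}. norm x \<le> P" using psi_bdd unfolding bounded_iff by blast
  have "\<psi> r \<le> P" if "0 \<le> r" for r
    using P that abs_le_D1[of "\<psi> r" P] by simp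
  then show thesis using that by blast
qed

lemma g_has_derivative_at: "0 < r \<Longrightarrow> (g has_real_derivative g' r) (at r)"
  using g_deriv[of r] at_within_interior[of r "{0..}"] by simp

lemma g_cont: "continuous_on {0..} g"
  using g_deriv by (intro DERIV_continuous_on) auto

lemma g_slope_ge:
  assumes "0 \<le> s" "s \<le> t" "\<And>r. s < r \<Longrightarrow> r < t \<Longrightarrow> c \<le> g' r"
  shows "c * (t - s) \<le> g t - g s"
  using assms continuous_on_subset[OF g_cont, of "{s..t}"]
  by (intro DERIV_lower_bound_imp_diff_ge[where f' = g'] g_has_derivative_at) auto

lemma g_slope_le:
  assumes "0 \<le> s" "s \<le> t" "\<And>r. s < r \<Longrightarrow> r < t \<Longrightarrow> g' r \<le> c"
  shows "g t - g s \<le> c * (t - s)"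
  using assms continuous_on_subset[OF g_cont, of "{s..t}"]
  by (intro DERIV_upper_bound_imp_diff_le[where f' = g'] g_has_derivative_at) auto

lemma g'_nonneg:
  assumes "0 \<le> r" shows "0 \<le> g' r"
proof -
  obtain m M where "0 < m" "\<forall>s\<in>{0..r}. m \<le> g' s \<and> g' s \<le> M"
    using g'_bounds[OF assms] by blast
  then have "m \<le> g' r" using assms by auto
  with \<open>0 < m\<close> show ?thesis by simp
qed

lemma g_mono: "0 \<le> s \<Longrightarrow> s \<le> t \<Longrightarrow> g s \<le> g t"
  using g_slope_ge[of s t 0] g'_nonneg by simp

definition "P0M = Max ((\<lambda>i. norm (p0 i)) ` {1..N})"
definition "MG = (SUP r\<in>{0..P0M}. g' r)"
definition "mG = (INF r\<in>{0..P0M}. g' r)"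

lemma norm_p0_le_P0M: "i \<in> {1..N} \<Longrightarrow> norm (p0 i) \<le> P0M"
  unfolding P0M_def by (rule Max_ge) auto

lemma P0M_nonneg: "0 \<le> P0M"
  using norm_p0_le_P0M[of 1] N by (meson atLeastAtMost_iff le_refl norm_ge_zero order_trans)

lemma g'_between_mG_MG: "0 \<le> r \<Longrightarrow> r \<le> P0M \<Longrightarrow> mG \<le> g' r \<and> g' r \<le> MG"
  and mG_pos: "0 < mG"
proof -
  obtain m M where m: "0 < m" "\<forall>r\<in>{0..P0M}. m \<le> g' r \<and> g' r \<le> M"
    using g'_bounds[OF P0M_nonneg] by blast
  then have bdd: "bdd_below (g' ` {0..P0M})" "bdd_above (g' ` {0..P0M})"
    by (auto intro!: bdd_belowI[of _ m] bdd_aboveI[of _ M])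
  show "0 \<le> r \<Longrightarrow> r \<le> P0M \<Longrightarrow> mG \<le> g' r \<and> g' r \<le> MG"
    unfolding mG_def MG_def by (auto intro: cINF_lower[OF bdd(1)] cSUP_upper[OF _ bdd(2)])
  have "m \<le> mG" unfolding mG_def using m P0M_nonneg by (intro cINF_greatest) auto
  then show "0 < mG" using m(1) by simp
qed

lemma mG_le_MG: "mG \<le> MG"
  using g'_between_mG_MG[of 0] P0M_nonneg by simp

lemma g_slope_ge_mG: "0 \<le> s \<Longrightarrow> s \<le> t \<Longrightarrow> t \<le> P0M \<Longrightarrow> mG * (t - s) \<le> g t - g s"
  using g'_between_mG_MG by (intro g_slope_ge) auto

lemma g_lipschitz_MG: "MG-lipschitz_on {0..P0M} g"
proof (rule lipschitz_onI)
  show "0 \<le> MG" using mG_pos mG_le_MG by simp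
  fix s t assume "s \<in> {0..P0M}" "t \<in> {0..P0M}"
  then have "\<bar>g t - g s\<bar> \<le> MG * \<bar>t - s\<bar>"
    using g'_between_mG_MG g_slope_le[of s t MG] g_slope_le[of t s MG] g_mono[of s t] g_mono[of t s]
    by (cases "s \<le> t") auto
  then show "dist (g s) (g t) \<le> MG * dist s t"
    by (simp add: dist_real_def abs_minus_commute)
qed

lemma inner_force_nonpos_at_max:
  assumes "i \<in> {1..N}" and "\<And>k. k \<in> {1..N} \<Longrightarrow> norm (p k t) \<le> norm (p i t)"
  shows "p i t \<bullet> force i t \<le> 0"
proof -
  have "p i t \<bullet> vel k t \<le> p i t \<bullet> vel i t" if "k \<in> {1..N}" for k
  proof -
    have "p i t \<bullet> vel k t \<le> norm (p i t) * g (norm (p k t))"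
      using g_mono[of 0 "norm (p k t)"] g0 by (intro inner_vel_ctrl_le) simp
    also have "\<dots> \<le> norm (p i t) * g (norm (p i t))"
      using assms(2)[OF that] by (intro mult_left_mono g_mono) auto
    finally show ?thesis by (simp add: inner_vel_ctrl_self)
  qed
  then have sum_le: "(\<Sum>k\<in>{1..N}. \<psi> (norm (q k t - q i t)) * (p i t \<bullet> (vel k t - vel i t))) \<le> 0"
    by (intro sum_nonpos mult_nonneg_nonpos psi_nonneg) (auto simp: inner_diff_right)
  have "p i t \<bullet> force i t
      = \<kappa> / real N * (\<Sum>k\<in>{1..N}. \<psi> (norm (q k t - q i t)) * (p i t \<bullet> (vel k t - vel i t)))"
    by (simp add: inner_sum_right)
  also have "\<dots> \<le> 0"
    by (rule mult_nonneg_nonpos) (use kappa sum_le in auto)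
  finally show ?thesis .
qed

lemma norm_p_le_P0M:
  assumes "i \<in> {1..N}" "0 \<le> t"
  shows "norm (p i t) \<le> P0M"
proof -
  have "(norm (p i t))\<^sup>2 \<le> P0M\<^sup>2"
  proof (rule max_principle[where u = "\<lambda>i t. (norm (p i t))\<^sup>2" and I = "{1..N}"])
    show "\<And>i. i \<in> {1..N} \<Longrightarrow> continuous_on {0..} (\<lambda>t. (norm (p i t))\<^sup>2)"
      by (intro continuous_intros p_cont)
    show "\<And>i t. i \<in> {1..N} \<Longrightarrow> 0 < t \<Longrightarrow>
        ((\<lambda>t. (norm (p i t))\<^sup>2) has_real_derivative 2 * (p i t \<bullet> force i t)) (at t)"
      by (intro has_real_derivative_norm_power2 p_deriv)
    show "2 * (p i t \<bullet> force i t) \<le> 0"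
      if i: "i \<in> {1..N}" and at_max: "\<And>k. k \<in> {1..N} \<Longrightarrow> (norm (p k t))\<^sup>2 \<le> (norm (p i t))\<^sup>2"
      for i t
    proof -
      have "norm (p k t) \<le> norm (p i t)" if "k \<in> {1..N}" for k
        using at_max[OF that] by (rule power2_le_imp_le) simp
      then have "p i t \<bullet> force i t \<le> 0" by (rule inner_force_nonpos_at_max[OF i])
      then show ?thesis by linarith
    qed
    show "(norm (p i 0))\<^sup>2 \<le> P0M\<^sup>2" if "i \<in> {1..N}" for i
      using norm_p0_le_P0M[OF that] p_init[OF that] by (simp add: power_mono)
  qed (use assms in auto)
  then show ?thesis using P0M_nonneg by (rule power2_le_imp_le)
qed

lemma vel_strongly_monotone:
  assumes "i \<in> {1..N}" "k \<in> {1..N}" "0 \<le> t"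
  shows "mG * (norm (p i t - p k t))\<^sup>2 \<le> (p i t - p k t) \<bullet> (vel i t - vel k t)"
  using vel_ctrl_strongly_monotone[OF g0 g_slope_ge_mG norm_p_le_P0M norm_p_le_P0M] assms by blast

lemma vel_lipschitz:
  assumes "i \<in> {1..N}" "k \<in> {1..N}" "0 \<le> t"
  shows "norm (vel i t - vel k t) \<le> MG * norm (p i t - p k t)"
proof -
  have "mono_on {0..P0M} g" using g_mono by (auto intro: mono_onI)
  then show ?thesis
    using vel_ctrl_lipschitz[OF g0 _ g_lipschitz_MG norm_p_le_P0M norm_p_le_P0M] assms by blast
qed

abbreviation sqnormP :: "real \<Rightarrow> real" where
  "sqnormP t \<equiv> cfg_sqnorm N (\<lambda>i. p i t)"

abbreviation sqnormQ :: "real \<Rightarrow> real" where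
  "sqnormQ t \<equiv> cfg_sqnorm N (\<lambda>i. q i t)"

abbreviation dissipation :: "real \<Rightarrow> real" where
  "dissipation t \<equiv> \<Sum>i\<in>{1..N}. \<Sum>k\<in>{1..N}.
     \<psi> (norm (q k t - q i t)) * ((p k t - p i t) \<bullet> (vel k t - vel i t))"

lemma sqnormP_cont: "continuous_on {0..} sqnormP"
  and sqnormQ_cont: "continuous_on {0..} sqnormQ"
  unfolding cfg_sqnorm_def by (intro continuous_intros p_cont q_cont; simp)+

lemma sqnormP_deriv:
  assumes "0 < t"
  shows "(sqnormP has_real_derivative - 2 * \<kappa> * dissipation t) (at t)"
proof -
  have "(sqnormP has_real_derivative
      (\<Sum>i\<in>{1..N}. \<Sum>j\<in>{1..N}. 2 * ((p i t - p j t) \<bullet> (force i t - force j t)))) (at t)"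
    unfolding cfg_sqnorm_def
    by (intro DERIV_sum has_real_derivative_norm_power2 has_vector_derivative_diff p_deriv assms) auto
  moreover have "(\<Sum>i\<in>{1..N}. \<Sum>j\<in>{1..N}. (p i t - p j t) \<bullet> (force i t - force j t))
      = - real (card {1..N}) * (\<kappa> / real N) * dissipation t"
    by (rule double_sum_inner_alignment) (simp add: norm_minus_commute)
  ultimately show ?thesis
    using N by (simp add: sum_distrib_left[symmetric] mult.assoc)
qed

lemma sqnormQ_deriv:
  assumes "0 < t"
  shows "(sqnormQ has_real_derivative
    (\<Sum>i\<in>{1..N}. \<Sum>j\<in>{1..N}. 2 * ((q i t - q j t) \<bullet> (vel i t - vel j t)))) (at t)"
  unfolding cfg_sqnorm_def
  by (intro DERIV_sum has_real_derivative_norm_power2 has_vector_derivative_diff q_deriv assms) auto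

lemma dissipation_ge:
  assumes "0 \<le> t" and "0 \<le> \<rho>"
    and \<rho>_le: "\<And>i k. i \<in> {1..N} \<Longrightarrow> k \<in> {1..N} \<Longrightarrow> \<rho> \<le> \<psi> (norm (q k t - q i t))"
  shows "mG * \<rho> * sqnormP t \<le> dissipation t"
proof -
  have "\<rho> * (mG * (norm (p i t - p k t))\<^sup>2)
      \<le> \<psi> (norm (q k t - q i t)) * ((p k t - p i t) \<bullet> (vel k t - vel i t))"
    if "i \<in> {1..N}" "k \<in> {1..N}" for i k
  proof (rule mult_mono)
    show "mG * (norm (p i t - p k t))\<^sup>2 \<le> (p k t - p i t) \<bullet> (vel k t - vel i t)"
      using vel_strongly_monotone[of k i t] that \<open>0 \<le> t\<close> by (simp add: norm_minus_commute)
    show "0 \<le> mG * (norm (p i t - p k t))\<^sup>2" using mG_pos by simp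
  qed (use \<rho>_le[OF that] psi_nonneg[of "norm (q k t - q i t)"] in auto)
  then have "(\<Sum>i\<in>{1..N}. \<Sum>k\<in>{1..N}. \<rho> * (mG * (norm (p i t - p k t))\<^sup>2)) \<le> dissipation t"
    by (intro sum_mono) auto
  then show ?thesis
    by (simp add: cfg_sqnorm_def sum_distrib_left mult.assoc mult.left_commute)
qed

lemma sqnormQ_deriv_le:
  assumes "0 \<le> t"
  shows "(\<Sum>i\<in>{1..N}. \<Sum>j\<in>{1..N}. 2 * ((q i t - q j t) \<bullet> (vel i t - vel j t)))
    \<le> 2 * MG * sqrt (sqnormQ t) * sqrt (sqnormP t)"
proof -
  have "(q i t - q j t) \<bullet> (vel i t - vel j t) \<le> MG * (norm (q i t - q j t) * norm (p i t - p j t))"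
    if "i \<in> {1..N}" "j \<in> {1..N}" for i j
  proof -
    have "(q i t - q j t) \<bullet> (vel i t - vel j t) \<le> norm (q i t - q j t) * norm (vel i t - vel j t)"
      by (rule Cauchy_Schwarz_ineq2[THEN abs_le_D1])
    also have "\<dots> \<le> norm (q i t - q j t) * (MG * norm (p i t - p j t))"
      using vel_lipschitz[OF that \<open>0 \<le> t\<close>] by (intro mult_left_mono) auto
    finally show ?thesis by (simp add: mult_ac)
  qed
  then have "(\<Sum>i\<in>{1..N}. \<Sum>j\<in>{1..N}. 2 * ((q i t - q j t) \<bullet> (vel i t - vel j t)))
      \<le> (\<Sum>i\<in>{1..N}. \<Sum>j\<in>{1..N}. 2 * MG * (norm (q i t - q j t) * norm (p i t - p j t)))"
    by (intro sum_mono) (simp add: mult.assoc)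
  also have "\<dots> = 2 * MG * (\<Sum>i\<in>{1..N}. \<Sum>j\<in>{1..N}. norm (q i t - q j t) * norm (p i t - p j t))"
    by (simp add: sum_distrib_left)
  also have "\<dots> \<le> 2 * MG * (sqrt (sqnormQ t) * sqrt (sqnormP t))"
    using mG_pos mG_le_MG Cauchy_Schwarz_double_sum[of "{1..N}" "\<lambda>i j. norm (q i t - q j t)"
        "\<lambda>i j. norm (p i t - p j t)"]
    by (intro mult_left_mono) (auto simp: cfg_sqnorm_def)
  finally show ?thesis by (simp add: mult.assoc)
qed

lemma exp_decay_if_bounded_diam:
  assumes D: "\<And>t. 0 \<le> t \<Longrightarrow> cfg_diam N (\<lambda>i. q i t) \<le> D"
  shows "\<exists>B C. B > 0 \<and> C > 0 \<and> (\<forall>t\<ge>0. cfg_diam N (\<lambda>i. p i t) \<le> B * exp (- C * t))"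
proof -
  have "0 \<le> D" using D[of 0] cfg_diam_nonneg[OF N] by (meson order_trans order_refl)
  define l where "l = 2 * \<kappa> * mG * \<psi> D"
  have "0 < l" using kappa mG_pos psi_pos[OF \<open>0 \<le> D\<close>] by (simp add: l_def)
  have decay: "sqnormP t \<le> sqnormP 0 * exp (- l * t)" if "0 \<le> t" for t
  proof (rule exp_decay_of_DERIV_le[OF sqnormP_cont sqnormP_deriv _ that])
    fix s :: real assume "0 < s"
    have "\<psi> D \<le> \<psi> (norm (q k s - q i s))" if "i \<in> {1..N}" "k \<in> {1..N}" for i k
      using norm_diff_le_cfg_diam[OF that(2,1), of "\<lambda>i. q i s"] D[of s] \<open>0 < s\<close>
      by (intro psi_antimono) auto
    then have "mG * \<psi> D * sqnormP s \<le> dissipation s"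
      using \<open>0 < s\<close> psi_nonneg[OF \<open>0 \<le> D\<close>] by (intro dissipation_ge) auto
    then show "- 2 * \<kappa> * dissipation s \<le> - l * sqnormP s"
      using kappa by (simp add: l_def)
  qed
  define B C where "B = sqrt (sqnormP 0) + 1" and "C = l / 2"
  have "cfg_diam N (\<lambda>i. p i t) \<le> B * exp (- C * t)" if "0 \<le> t" for t
  proof -
    have "cfg_diam N (\<lambda>i. p i t) \<le> sqrt (sqnormP t)"
      using cfg_diam_le_cfg_norm[OF N] by (simp add: cfg_norm_eq_sqrt_cfg_sqnorm)
    also have "\<dots> \<le> sqrt (sqnormP 0 * exp (- l * t))"
      using decay[OF that] by simp
    also have "\<dots> = sqrt (sqnormP 0) * exp (- C * t)"
    proof -
      have "exp (- l * t) = (exp (- C * t))\<^sup>2"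
        by (simp add: C_def power2_eq_square flip: exp_add)
      then show ?thesis by (simp add: real_sqrt_mult)
    qed
    also have "\<dots> \<le> B * exp (- C * t)"
      by (simp add: B_def)
    finally show ?thesis .
  qed
  moreover have "0 < B" "0 < C"
    using \<open>0 < l\<close> by (simp_all add: B_def C_def add_nonneg_pos cfg_sqnorm_nonneg)
  ultimately show ?thesis by blast
qed

lemma bounded_diam_if_exp_decay:
  assumes "0 < B" "0 < C" and decay: "\<And>t. 0 \<le> t \<Longrightarrow> cfg_diam N (\<lambda>i. p i t) \<le> B * exp (- C * t)"
  shows "\<exists>D. \<forall>t\<ge>0. cfg_diam N (\<lambda>i. q i t) \<le> D"
proof -
  have "cfg_diam N (\<lambda>i. q i t) \<le> cfg_diam N (\<lambda>i. q i 0) + MG * B / C" if "0 \<le> t" for t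
  proof (rule cfg_diam_le[OF N])
    fix i j assume ij: "i \<in> {1..N}" "j \<in> {1..N}"
    have "norm ((q i t - q j t) - (q i 0 - q j 0)) \<le> MG * B / C"
    proof (rule norm_diff_le_of_exp_decaying_derivative[where f' = "\<lambda>s. vel i s - vel j s"])
      show "continuous_on {0..} (\<lambda>s. q i s - q j s)"
        using ij by (intro continuous_intros q_cont)
      fix s :: real assume "0 < s"
      then show "((\<lambda>s. q i s - q j s) has_vector_derivative vel i s - vel j s) (at s)"
        using ij by (intro has_vector_derivative_diff q_deriv)
      have "norm (vel i s - vel j s) \<le> MG * norm (p i s - p j s)"
        using vel_lipschitz ij \<open>0 < s\<close> by simp
      also have "\<dots> \<le> MG * (B * exp (- C * s))"
        using norm_diff_le_cfg_diam[OF ij, of "\<lambda>i. p i s"] decay[of s] \<open>0 < s\<close> mG_pos mG_le_MG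
        by (intro mult_left_mono) auto
      finally show "norm (vel i s - vel j s) \<le> MG * B * exp (- C * s)" by (simp add: mult.assoc)
    qed (use assms mG_pos mG_le_MG that in auto)
    moreover have "norm (q i 0 - q j 0) \<le> cfg_diam N (\<lambda>i. q i 0)"
      by (rule norm_diff_le_cfg_diam[OF ij])
    ultimately show "norm (q i t - q j t) \<le> cfg_diam N (\<lambda>i. q i 0) + MG * B / C"
      using norm_triangle_ineq[of "(q i t - q j t) - (q i 0 - q j 0)" "q i 0 - q j 0"] by simp
  qed
  then show ?thesis by blast
qed

lemma exp_decay_iff_bounded_diam:
  "(\<exists>B C. B > 0 \<and> C > 0 \<and> (\<forall>t\<ge>0. cfg_diam N (\<lambda>i. p i t) \<le> B * exp (- C * t)))
    \<longleftrightarrow> (\<exists>D. \<forall>t\<ge>0. cfg_diam N (\<lambda>i. q i t) \<le> D)"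
  using exp_decay_if_bounded_diam bounded_diam_if_exp_decay by meson

lemma flocking_iff_bounded_diam: "flocking N q p \<longleftrightarrow> (\<exists>D. \<forall>t\<ge>0. cfg_diam N (\<lambda>i. q i t) \<le> D)"
proof -
  have "((\<lambda>t. cfg_diam N (\<lambda>i. p i t)) \<longlongrightarrow> 0) at_top"
    if "0 < C" "\<forall>t\<ge>0. cfg_diam N (\<lambda>i. p i t) \<le> B * exp (- C * t)" for B C
  proof (rule tendsto_sandwich[OF _ _ tendsto_const])
    show "((\<lambda>t. B * exp (- C * t)) \<longlongrightarrow> 0) at_top" using \<open>0 < C\<close> by real_asymp
    show "\<forall>\<^sub>F t in at_top. 0 \<le> cfg_diam N (\<lambda>i. p i t)" by (simp add: cfg_diam_nonneg[OF N])
    show "\<forall>\<^sub>F t in at_top. cfg_diam N (\<lambda>i. p i t) \<le> B * exp (- C * t)"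
      using that(2) by (auto simp: eventually_at_top_linorder)
  qed
  then show ?thesis
    unfolding flocking_def using exp_decay_iff_bounded_diam by blast
qed

lemma lyapunov_functional_antimono:
  assumes "0 \<le> t"
  shows "cfg_norm N (\<lambda>i. p i t) + mG * \<kappa> / MG * integral {0..cfg_norm N (\<lambda>i. q i t)} \<psi>
    \<le> cfg_norm N (\<lambda>i. p i 0) + mG * \<kappa> / MG * integral {0..cfg_norm N (\<lambda>i. q i 0)} \<psi>"
proof -
  obtain P where P: "\<And>r. 0 \<le> r \<Longrightarrow> \<psi> r \<le> P" using psi_bounded by blast
  have "sqrt (sqnormP t) + \<kappa> * mG / MG * integral {0..sqrt (sqnormQ t)} \<psi>
      \<le> sqrt (sqnormP 0) + \<kappa> * mG / MG * integral {0..sqrt (sqnormQ 0)} \<psi>"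
  proof (rule lyapunov_inequality[OF sqnormP_cont _ sqnormP_deriv sqnormQ_cont _ sqnormQ_deriv _ _
        psi_cont psi_nonneg P _ _ assms])
    fix s r :: real assume "0 < s" "sqrt (sqnormQ s) \<le> r"
    then have "\<psi> r \<le> \<psi> (norm (q k s - q i s))" if "i \<in> {1..N}" "k \<in> {1..N}" for i k
      using norm_diff_le_cfg_norm[OF that(2,1), of "\<lambda>i. q i s"]
      by (intro psi_antimono) (auto simp: cfg_norm_eq_sqrt_cfg_sqnorm)
    moreover have "0 \<le> r"
      using \<open>sqrt (sqnormQ s) \<le> r\<close> real_sqrt_ge_zero[OF cfg_sqnorm_nonneg] by (rule order_trans[rotated])
    ultimately have "mG * \<psi> r * sqnormP s \<le> dissipation s"
      using \<open>0 < s\<close> psi_nonneg[of r] by (intro dissipation_ge) auto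
    then show "- 2 * \<kappa> * dissipation s \<le> - 2 * (\<kappa> * mG) * \<psi> r * sqnormP s"
      using kappa by (simp add: algebra_simps)
  next
    fix s :: real assume "0 < s"
    then show "(\<Sum>i\<in>{1..N}. \<Sum>j\<in>{1..N}. 2 * ((q i s - q j s) \<bullet> (vel i s - vel j s)))
        \<le> 2 * MG * sqrt (sqnormQ s) * sqrt (sqnormP s)"
      by (intro sqnormQ_deriv_le) simp
  qed (use kappa mG_pos mG_le_MG in \<open>auto simp: cfg_sqnorm_nonneg\<close>)
  then show ?thesis by (simp add: cfg_norm_eq_sqrt_cfg_sqnorm mult.commute)
qed

lemma bounded_cfg_norm_if_integral_exceeds:
  assumes "cfg_norm N (\<lambda>i. q i 0) \<le> R"
    and less: "cfg_norm N (\<lambda>i. p i 0)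
      < mG * \<kappa> / MG * integral {cfg_norm N (\<lambda>i. q i 0)..R} \<psi>"
    and "0 \<le> t"
  shows "cfg_norm N (\<lambda>i. q i t) \<le> R"
proof (rule ccontr)
  define X0 Xt where "X0 = cfg_norm N (\<lambda>i. q i 0)" and "Xt = cfg_norm N (\<lambda>i. q i t)"
  define c where "c = mG * \<kappa> / MG"
  assume "\<not> cfg_norm N (\<lambda>i. q i t) \<le> R"
  then have "R \<le> Xt" by (simp add: Xt_def)
  have "0 \<le> X0" by (simp add: X0_def cfg_norm_eq_sqrt_cfg_sqnorm cfg_sqnorm_nonneg)
  have "0 < c" using mG_pos mG_le_MG kappa by (simp add: c_def)
  have "c * integral {X0..R} \<psi> = c * (integral {0..R} \<psi> - integral {0..X0} \<psi>)"
    using integral_upper_diff[OF psi_cont \<open>0 \<le> X0\<close> assms(1)[folded X0_def]] by simp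
  also have "\<dots> \<le> c * (integral {0..Xt} \<psi> - integral {0..X0} \<psi>)"
    using integral_upper_mono[OF psi_cont psi_nonneg, of R Xt] \<open>R \<le> Xt\<close>
      \<open>0 \<le> X0\<close> assms(1) \<open>0 < c\<close> by (simp add: X0_def)
  also have "\<dots> \<le> cfg_norm N (\<lambda>i. p i 0) - cfg_norm N (\<lambda>i. p i t)"
    using lyapunov_functional_antimono[OF \<open>0 \<le> t\<close>] by (simp add: c_def X0_def Xt_def algebra_simps)
  also have "\<dots> \<le> cfg_norm N (\<lambda>i. p i 0)"
    by (simp add: cfg_norm_eq_sqrt_cfg_sqnorm cfg_sqnorm_nonneg)
  finally show False using less by (simp add: c_def X0_def)
qed

definition "Mcal = min mG (mG\<^sup>2 / MG)"

lemma cfg_norm_initial: "cfg_norm N (\<lambda>i. q i 0) = cfg_norm N q0" "cfg_norm N (\<lambda>i. p i 0) = cfg_norm N p0"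
  using cfg_sqnorm_cong[of N "\<lambda>i. q i 0" q0] cfg_sqnorm_cong[of N "\<lambda>i. p i 0" p0] q_init p_init
  by (simp_all add: cfg_norm_eq_sqrt_cfg_sqnorm)

lemma Mcal_pos: "0 < Mcal" and Mcal_le_mG: "Mcal \<le> mG"
  using mG_pos mG_le_MG by (auto simp: Mcal_def)

lemma flocking_if_small_initial_velocity:
  assumes "ennreal (cfg_norm N p0)
    < ennreal (Mcal * \<kappa> / MG) * (\<integral>\<^sup>+s\<in>{cfg_norm N q0..}. ennreal (\<psi> s) \<partial>lborel)"
  shows "flocking N q p"
proof -
  define X0 V0 c where "X0 = cfg_norm N q0" and "V0 = cfg_norm N p0" and "c = Mcal * \<kappa> / MG"
  have "0 \<le> X0" "0 \<le> V0" by (simp_all add: X0_def V0_def cfg_norm_eq_sqrt_cfg_sqnorm cfg_sqnorm_nonneg)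
  have "0 \<le> c" using Mcal_pos mG_pos mG_le_MG kappa by (simp add: c_def)
  have cont: "continuous_on {X0..} \<psi>"
    by (rule continuous_on_subset[OF psi_cont]) (use \<open>0 \<le> X0\<close> in auto)
  have nonneg: "\<And>x. X0 \<le> x \<Longrightarrow> 0 \<le> \<psi> x" using \<open>0 \<le> X0\<close> psi_nonneg by simp
  have "ennreal V0 < ennreal c * (\<integral>\<^sup>+s\<in>{X0..}. ennreal (\<psi> s) \<partial>lborel)"
    using assms by (simp only: X0_def V0_def c_def)
  also have "\<dots> = (SUP n::nat. ennreal (c * integral {X0..X0 + real n} \<psi>))"
    using \<open>0 \<le> c\<close>
    by (simp add: nn_integral_atLeast_eq_SUP_integral[OF cont nonneg] SUP_mult_left_ennreal ennreal_mult')
  finally obtain n :: nat where "ennreal V0 < ennreal (c * integral {X0..X0 + real n} \<psi>)"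
    unfolding less_SUP_iff by blast
  then have "V0 < c * integral {X0..X0 + real n} \<psi>"
    using \<open>0 \<le> V0\<close> by (simp add: ennreal_less_iff)
  also have "\<dots> \<le> mG * \<kappa> / MG * integral {X0..X0 + real n} \<psi>"
  proof (rule mult_right_mono)
    show "c \<le> mG * \<kappa> / MG"
      using Mcal_le_mG kappa mG_pos mG_le_MG by (simp add: c_def divide_right_mono)
    show "0 \<le> integral {X0..X0 + real n} \<psi>"
      by (rule integral_atLeastAtMost_nonneg[OF cont nonneg order_refl])
  qed
  finally have less: "cfg_norm N (\<lambda>i. p i 0)
      < mG * \<kappa> / MG * integral {cfg_norm N (\<lambda>i. q i 0)..X0 + real n} \<psi>"
    by (simp only: cfg_norm_initial X0_def V0_def)
  have "cfg_norm N (\<lambda>i. q i 0) \<le> X0 + real n"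
    by (simp add: cfg_norm_initial X0_def)
  from this less have norm_le: "cfg_norm N (\<lambda>i. q i t) \<le> X0 + real n" if "0 \<le> t" for t
    using that by (rule bounded_cfg_norm_if_integral_exceeds)
  have "cfg_diam N (\<lambda>i. q i t) \<le> X0 + real n" if "0 \<le> t" for t
    using cfg_diam_le_cfg_norm[OF N, of "\<lambda>i. q i t"] norm_le[OF that] by linarith
  then show ?thesis using flocking_iff_bounded_diam by blast
qed

lemma flocking_if_psi_not_integrable:
  assumes "(\<integral>\<^sup>+s\<in>{0<..}. ennreal (\<psi> s) \<partial>lborel) = \<infinity>"
  shows "flocking N q p"
proof (rule flocking_if_small_initial_velocity)
  have "(\<integral>\<^sup>+s\<in>{0<..}. ennreal (\<psi> s) \<partial>lborel) \<le> (\<integral>\<^sup>+s\<in>{0..}. ennreal (\<psi> s) \<partial>lborel)"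
    by (intro nn_integral_mono) (simp split: split_indicator)
  then have top: "(\<integral>\<^sup>+s\<in>{0..}. ennreal (\<psi> s) \<partial>lborel) = \<infinity>"
    using assms by (simp add: top_unique)
  have "(\<integral>\<^sup>+s\<in>{cfg_norm N q0..}. ennreal (\<psi> s) \<partial>lborel) = \<infinity>"
    by (rule nn_integral_atLeast_eq_top_shift[OF psi_cont _ top])
      (auto simp: psi_nonneg cfg_norm_eq_sqrt_cfg_sqnorm cfg_sqnorm_nonneg)
  then show "ennreal (cfg_norm N p0)
      < ennreal (Mcal * \<kappa> / MG) * (\<integral>\<^sup>+s\<in>{cfg_norm N q0..}. ennreal (\<psi> s) \<partial>lborel)"
    using Mcal_pos mG_pos mG_le_MG kappa by (simp add: ennreal_mult_top)
qed

end

theorem theorem2p1: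
  fixes N :: nat and \<kappa> :: real
    and g g' \<psi> :: "real \<Rightarrow> real"
    and q0 p0 :: "nat \<Rightarrow> 'a::euclidean_space"
    and q p :: "nat \<Rightarrow> real \<Rightarrow> 'a"
  assumes N: "N \<ge> 1" and kappa: "\<kappa> > 0"
    and g_deriv: "\<And>r. r \<ge> 0 \<Longrightarrow> (g has_real_derivative g' r) (at r within {0..})"
    and g'_cont: "continuous_on {0..} g'"
    and g0: "g 0 = 0"
    and g'_bounds: "\<And>b. b \<ge> 0 \<Longrightarrow> \<exists>m M. 0 < m \<and> (\<forall>r\<in>{0..b}. m \<le> g' r \<and> g' r \<le> M)"
    and g_cvx: "convex_on {0<..} g \<or> concave_on {0<..} g"
    and psi_pos: "\<And>r. r \<ge> 0 \<Longrightarrow> \<psi> r > 0"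
    and psi_bdd: "bounded (\<psi> ` {0..})"
    and psi_lip: "\<exists>L. L-lipschitz_on {0..} \<psi>"
    and psi_noninc: "\<And>r s. r \<ge> 0 \<Longrightarrow> s \<ge> 0 \<Longrightarrow> (\<psi> r - \<psi> s) * (r - s) \<le> 0"
    and sol: "CSVC_solution N \<kappa> g \<psi> q0 p0 q p"
  shows
   "(flocking N q p
       = (\<exists>B C. B > 0 \<and> C > 0 \<and> (\<forall>t\<ge>0. cfg_diam N (\<lambda>i. p i t) \<le> B * exp (- C * t))))
    \<and> ((\<exists>B C. B > 0 \<and> C > 0 \<and> (\<forall>t\<ge>0. cfg_diam N (\<lambda>i. p i t) \<le> B * exp (- C * t)))
       = (\<exists>D. \<forall>t\<ge>0. cfg_diam N (\<lambda>i. q i t) \<le> D))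
    \<and> (let P0M = Max ((\<lambda>i. norm (p0 i)) ` {1..N});
           MG = (SUP r\<in>{0..P0M}. g' r);
           mG = (INF r\<in>{0..P0M}. g' r);
           \<M> = min mG (mG\<^sup>2 / MG)
       in ennreal (cfg_norm N p0)
            < ennreal (\<M> * \<kappa> / MG) * (\<integral>\<^sup>+ s\<in>{cfg_norm N q0..}. ennreal (\<psi> s) \<partial>lborel)
          \<longrightarrow> flocking N q p)
    \<and> ((\<integral>\<^sup>+ s\<in>{0<..}. ennreal (\<psi> s) \<partial>lborel) = \<infinity> \<longrightarrow> flocking N q p)"
proof -
  interpret cucker_smale_vc N \<kappa> g g' \<psi> q0 p0 q p
    by unfold_locales (fact N kappa g_deriv g0 g'_bounds psi_pos psi_bdd psi_lip psi_noninc sol)+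
  show ?thesis
    using exp_decay_iff_bounded_diam flocking_iff_bounded_diam flocking_if_psi_not_integrable
      flocking_if_small_initial_velocity[unfolded Mcal_def mG_def MG_def P0M_def]
    unfolding Let_def by blast
qed

end
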